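(* Let $\mathfrak g$ be a Lie algebra over a field $\mathbb{K}$ of characteristic zero. Then $|U(\mathfrak g)|=\bigoplus_{m=0}^\infty|\mathrm{Sym}^m\mathfrak g|$, i.e. $|U(\mathfrak g)|$ is the direct sum of the images $|\mathrm{Sym}^m\mathfrak g|$ of the subspaces $\mathrm{Sym}^m\mathfrak g\subset U(\mathfrak g)$.
   Context: $|U(\mathfrak g)|=U(\mathfrak g)/[U(\mathfrak g),U(\mathfrak g)]$, where $[U(\mathfrak g),U(\mathfrak g)]$ is the span of $ab-ba$, with projection $u\mapsto|u|$. $\mathrm{Sym}^m\mathfrak g$ is identified with a subspace of $U(\mathfrak g)$ via the symmetrization map $x_1\cdots x_m\mapsto\frac1{m!}\sum_{\sigma\in\mathfrak S_m}x_{\sigma(1)}\cdots x_{\sigma(m)}$, so that $U(\mathfrak g)=\bigoplus_{m\ge0}\mathrm{Sym}^m\mathfrak g$ (PBW); $|\mathrm{Sym}^m\mathfrak g|$ denotes the image of this subspace in $|U(\mathfrak g)|$. *)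

theory Defs
  imports Main "HOL.Vector_Spaces" "HOL-Combinatorics.Permutations"
begin

definition lie_algebra :: "('k::field \<Rightarrow> 'g::ab_group_add \<Rightarrow> 'g) \<Rightarrow> ('g \<Rightarrow> 'g \<Rightarrow> 'g) \<Rightarrow> bool" where
  "lie_algebra sc br \<longleftrightarrow>
     module sc \<and>
     (\<forall>x y z. br (x + y) z = br x z + br y z) \<and>
     (\<forall>x y z. br x (y + z) = br x y + br x z) \<and>
     (\<forall>c x y. br (sc c x) y = sc c (br x y)) \<and>
     (\<forall>c x y. br x (sc c y) = sc c (br x y)) \<and>
     (\<forall>x. br x x = 0) \<and>
     (\<forall>x y z. br x (br y z) + br y (br z x) + br z (br x y) = 0)"

text \<open>Elements are finitely supported functions from words ('g list) to 'k;
  the product is concatenation of words extended bilinearly.\<close>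

definition fin_supp :: "('g list \<Rightarrow> 'k::zero) set" where
  "fin_supp = {f. finite {w. f w \<noteq> 0}}"

definition fadd :: "('a \<Rightarrow> 'k::plus) \<Rightarrow> ('a \<Rightarrow> 'k) \<Rightarrow> 'a \<Rightarrow> 'k" where
  "fadd f g = (\<lambda>w. f w + g w)"

definition fsub :: "('a \<Rightarrow> 'k::minus) \<Rightarrow> ('a \<Rightarrow> 'k) \<Rightarrow> 'a \<Rightarrow> 'k" where
  "fsub f g = (\<lambda>w. f w - g w)"

definition fscale :: "'k::times \<Rightarrow> ('a \<Rightarrow> 'k) \<Rightarrow> 'a \<Rightarrow> 'k" where
  "fscale c f = (\<lambda>w. c * f w)"

definition fsum :: "('i \<Rightarrow> 'a \<Rightarrow> 'k::comm_monoid_add) \<Rightarrow> 'i set \<Rightarrow> 'a \<Rightarrow> 'k" where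
  "fsum F A = (\<lambda>w. \<Sum>i\<in>A. F i w)"

definition wd :: "'g list \<Rightarrow> 'g list \<Rightarrow> 'k::zero_neq_one" where
  "wd u = (\<lambda>v. if v = u then 1 else 0)"

definition wmult :: "('g list \<Rightarrow> 'k::comm_semiring_0) \<Rightarrow> ('g list \<Rightarrow> 'k) \<Rightarrow> 'g list \<Rightarrow> 'k" where
  "wmult a b = (\<lambda>w. \<Sum>i\<le>length w. a (take i w) * b (drop i w))"

definition fspan :: "('a \<Rightarrow> 'k::comm_semiring_0) set \<Rightarrow> ('a \<Rightarrow> 'k) set" where
  "fspan S = {f. \<exists>A c. finite A \<and> A \<subseteq> S \<and> f = fsum (\<lambda>g. fscale (c g) g) A}"

definition set_plus_f :: "('a \<Rightarrow> 'k::plus) set \<Rightarrow> ('a \<Rightarrow> 'k) set \<Rightarrow> ('a \<Rightarrow> 'k) set" where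
  "set_plus_f A B = {fadd a b | a b. a \<in> A \<and> b \<in> B}"

text \<open>Defining relations of U(g) inside the free algebra: linearity of the
  embedding of g, and  x y - y x - [x,y].\<close>
definition ue_rels :: "('k::field \<Rightarrow> 'g \<Rightarrow> 'g::ab_group_add) \<Rightarrow> ('g \<Rightarrow> 'g \<Rightarrow> 'g) \<Rightarrow> ('g list \<Rightarrow> 'k) set" where
  "ue_rels sc br =
     {fsub (fsub (wd [x + y]) (wd [x])) (wd [y]) | x y. True} \<union>
     {fsub (wd [sc c x]) (fscale c (wd [x])) | c x. True} \<union>
     {fsub (fsub (wd [x, y]) (wd [y, x])) (wd [br x y]) | x y. True}"

text \<open>the two-sided ideal generated by the relations; U(g) = fin_supp / ue_ideal\<close>
definition ue_ideal :: "('k::field \<Rightarrow> 'g \<Rightarrow> 'g::ab_group_add) \<Rightarrow> ('g \<Rightarrow> 'g \<Rightarrow> 'g) \<Rightarrow> ('g list \<Rightarrow> 'k) set" where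
  "ue_ideal sc br = fspan {wmult (wmult a r) b | a r b. a \<in> fin_supp \<and> r \<in> ue_rels sc br \<and> b \<in> fin_supp}"

definition comm_span :: "('g list \<Rightarrow> 'k::field) set" where
  "comm_span = fspan {fsub (wmult a b) (wmult b a) | a b. a \<in> fin_supp \<and> b \<in> fin_supp}"

text \<open>preimage in the free algebra of [U(g),U(g)]; |U(g)| = fin_supp / trace_kernel\<close>
definition trace_kernel :: "('k::field \<Rightarrow> 'g \<Rightarrow> 'g::ab_group_add) \<Rightarrow> ('g \<Rightarrow> 'g \<Rightarrow> 'g) \<Rightarrow> ('g list \<Rightarrow> 'k) set" where
  "trace_kernel sc br = set_plus_f (ue_ideal sc br) comm_span"

definition symz :: "'g list \<Rightarrow> 'g list \<Rightarrow> 'k::field_char_0" where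
  "symz xs = fscale (1 / fact (length xs))
      (fsum (\<lambda>\<sigma>. wd (map (\<lambda>i. xs ! \<sigma> i) [0..<length xs])) {\<sigma>. \<sigma> permutes {..<length xs}})"

text \<open>Sym^m g as a subspace of the free algebra (its image in U(g) is Sym^m g \<subseteq> U(g))\<close>
definition sym_sub :: "nat \<Rightarrow> ('g list \<Rightarrow> 'k::field_char_0) set" where
  "sym_sub m = fspan {symz xs | xs. length xs = m}"

end

theory Submission
  imports Defs
begin

text \<open>Permuting the letters of a word changes it, modulo the defining ideal of \<open>U(g)\<close>, only by
  shorter words, since \<open>x y - y x \<equiv> [x, y]\<close>. Hence every word is congruent to its symmetrization
  plus shorter words, and by induction on the length every element is congruent to a sum of symmetric
  tensors of different degrees: the images of the \<open>Sym\<^sup>m g\<close> span \<open>|U(g)|\<close>.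

  For directness, write an element of the trace kernel as an element of the ideal plus a combination
  of commutators \<open>x w - w x\<close> of a letter and a word. Modulo the ideal, \<open>w\<close> is a sum of symmetric
  tensors, and \<open>ad x\<close> acts on the symmetrization of \<open>y\<^sub>1 \<dots> y\<^sub>m\<close> as a derivation, giving a
  sum of symmetrizations of degree \<open>m\<close>; these lie in the trace kernel, being congruent to a
  commutator. So a relation \<open>\<Sum> f\<^sub>m = 0\<close> in \<open>|U(g)|\<close> becomes \<open>\<Sum> (f\<^sub>m - h\<^sub>m) \<in> ideal\<close> with symmetric
  \<open>h\<^sub>m\<close> in the trace kernel, and it remains to see that a sum of symmetric tensors of distinct
  degrees lies in the ideal only if each summand does. This is the PBW theorem. For a totally
  ordered basis and a multiset \<open>M\<close> of basis vectors, the coefficient of the ordered monomial \<open>M\<close>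
  in the normal form of a word is well defined (diamond lemma; the overlap \<open>c a b\<close> resolves by
  the Jacobi identity), and its multilinear extension is a linear form vanishing on the ideal.
  Applied to the top-degree component it sees the expansion coefficients summed over the
  arrangements of \<open>M\<close>, all equal by symmetry; characteristic zero makes them vanish.\<close>

lemma fadd_apply: "fadd f g w = f w + g w" by (simp add: fadd_def)
lemma fsub_apply: "fsub f g w = f w - g w" by (simp add: fsub_def)
lemma fscale_apply: "fscale c f w = c * f w" by (simp add: fscale_def)
lemma fsum_apply: "fsum F A w = (\<Sum>i\<in>A. F i w)" by (simp add: fsum_def)
lemma wd_apply: "wd u w = (if w = u then 1 else 0)" by (simp add: wd_def)

lemmas fops_apply = fadd_apply fsub_apply fscale_apply fsum_apply

definition fsubspace :: "('a \<Rightarrow> 'k::field) set \<Rightarrow> bool" where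
  "fsubspace V \<longleftrightarrow> (\<lambda>_. 0) \<in> V \<and> (\<forall>f\<in>V. \<forall>g\<in>V. fadd f g \<in> V) \<and> (\<forall>c. \<forall>f\<in>V. fscale c f \<in> V)"

lemma fsubspace_zero: "fsubspace V \<Longrightarrow> (\<lambda>_. 0) \<in> V"
  by (simp add: fsubspace_def)

lemma fsubspace_add: "fsubspace V \<Longrightarrow> f \<in> V \<Longrightarrow> g \<in> V \<Longrightarrow> fadd f g \<in> V"
  by (simp add: fsubspace_def)

lemma fsubspace_scale: "fsubspace V \<Longrightarrow> f \<in> V \<Longrightarrow> fscale c f \<in> V"
  by (simp add: fsubspace_def)

lemma fsubspace_diff:
  assumes "fsubspace V" "f \<in> V" "g \<in> V"
  shows "fsub f g \<in> V"
proof -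
  have "fsub f g = fadd f (fscale (-1) g)" by (rule ext) (simp add: fops_apply)
  then show ?thesis using assms fsubspace_add fsubspace_scale by metis
qed

lemma fsubspace_fsum:
  assumes "fsubspace V" "\<And>i. i \<in> A \<Longrightarrow> F i \<in> V"
  shows "fsum F A \<in> V"
  using assms(2)
proof (induction A rule: infinite_finite_induct)
  case (infinite A)
  have "fsum F A = (\<lambda>_. 0)" using infinite by (simp add: fsum_def)
  then show ?case using assms(1) fsubspace_zero by metis
next
  case empty
  have "fsum F {} = (\<lambda>_. 0)" by (simp add: fsum_def)
  then show ?case using assms(1) fsubspace_zero by metis
next
  case (insert a A)
  have "fsum F (insert a A) = fadd (F a) (fsum F A)" by (rule ext) (simp add: fops_apply insert)
  then show ?case using insert assms(1) fsubspace_add by (metis insertCI)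
qed

lemma fsubspace_UNIV: "fsubspace UNIV"
  by (simp add: fsubspace_def)

lemma fspan_subspace: "fsubspace (fspan S)"
  unfolding fsubspace_def
proof (intro conjI ballI allI)
  show "(\<lambda>_. 0) \<in> fspan S" unfolding fspan_def
    by (intro CollectI exI[of _ "{}"]) (auto simp: fsum_def)
next
  fix f g assume f: "f \<in> fspan S" and g: "g \<in> fspan S"
  from f obtain A c where A: "finite A" "A \<subseteq> S" "f = fsum (\<lambda>g. fscale (c g) g) A"
    by (auto simp: fspan_def)
  from g obtain B d where B: "finite B" "B \<subseteq> S" "g = fsum (\<lambda>g. fscale (d g) g) B"
    by (auto simp: fspan_def)
  define e where "e x = (if x \<in> A then c x else 0) + (if x \<in> B then d x else 0)" for x
  have "fadd f g = fsum (\<lambda>g. fscale (e g) g) (A \<union> B)"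
  proof (rule ext)
    fix w
    have "(\<Sum>x\<in>A \<union> B. (if x \<in> A then c x else 0) * x w) = (\<Sum>x\<in>A. c x * x w)"
      by (rule sum.mono_neutral_cong_right) (use A B in auto)
    moreover have "(\<Sum>x\<in>A \<union> B. (if x \<in> B then d x else 0) * x w) = (\<Sum>x\<in>B. d x * x w)"
      by (rule sum.mono_neutral_cong_right) (use A B in auto)
    ultimately show "fadd f g w = fsum (\<lambda>g. fscale (e g) g) (A \<union> B) w"
      by (simp add: A B fops_apply e_def distrib_right sum.distrib)
  qed
  then show "fadd f g \<in> fspan S" unfolding fspan_def
    by (intro CollectI exI[of _ "A \<union> B"] exI[of _ e] conjI) (use A(1,2) B(1,2) in auto)
next
  fix k f assume "f \<in> fspan S"
  then obtain A c where A: "finite A" "A \<subseteq> S" "f = fsum (\<lambda>g. fscale (c g) g) A"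
    by (auto simp: fspan_def)
  have "fscale k f = fsum (\<lambda>g. fscale (k * c g) g) A"
    by (rule ext) (simp add: A fops_apply sum_distrib_left mult.assoc)
  then show "fscale k f \<in> fspan S" unfolding fspan_def
    by (intro CollectI exI[of _ A] exI[of _ "\<lambda>g. k * c g"] conjI) (use A(1,2) in auto)
qed

lemma fspan_superset:
  fixes f :: "'a \<Rightarrow> 'k::field"
  assumes "f \<in> S"
  shows "f \<in> fspan S"
proof -
  have "f = fsum (\<lambda>g. fscale 1 g) {f}" by (rule ext) (simp add: fops_apply)
  then show ?thesis unfolding fspan_def
    by (intro CollectI exI[of _ "{f}"] exI[of _ "\<lambda>_. 1"]) (use assms in auto)
qed

lemma fspan_minimal:
  assumes "fsubspace V" "S \<subseteq> V"
  shows "fspan S \<subseteq> V"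
proof
  fix f assume "f \<in> fspan S"
  then obtain A c where A: "finite A" "A \<subseteq> S" "f = fsum (\<lambda>g. fscale (c g) g) A"
    by (auto simp: fspan_def)
  show "f \<in> V" unfolding A(3) by (rule fsubspace_fsum) (use assms A in \<open>blast intro: fsubspace_scale\<close>)+
qed

lemma set_plus_f_subspace:
  assumes V: "fsubspace V" and W: "fsubspace W"
  shows "fsubspace (set_plus_f V W)"
  unfolding fsubspace_def set_plus_f_def
proof (intro conjI ballI allI)
  show "(\<lambda>_. 0) \<in> {fadd a b |a b. a \<in> V \<and> b \<in> W}"
    using fsubspace_zero[OF V] fsubspace_zero[OF W] by (auto intro!: exI[of _ "\<lambda>_. 0"] simp: fadd_def)
next
  fix f g assume "f \<in> {fadd a b |a b. a \<in> V \<and> b \<in> W}" "g \<in> {fadd a b |a b. a \<in> V \<and> b \<in> W}"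
  then obtain a b a' b' where "f = fadd a b" "g = fadd a' b'" "a \<in> V" "b \<in> W" "a' \<in> V" "b' \<in> W"
    by blast
  moreover have "fadd (fadd a b) (fadd a' b') = fadd (fadd a a') (fadd b b')"
    by (rule ext) (simp add: fops_apply algebra_simps)
  ultimately show "fadd f g \<in> {fadd a b |a b. a \<in> V \<and> b \<in> W}"
    using fsubspace_add[OF V] fsubspace_add[OF W] by blast
next
  fix c f assume "f \<in> {fadd a b |a b. a \<in> V \<and> b \<in> W}"
  then obtain a b where "f = fadd a b" "a \<in> V" "b \<in> W" by blast
  moreover have "fscale c (fadd a b) = fadd (fscale c a) (fscale c b)"
    by (rule ext) (simp add: fops_apply algebra_simps)
  ultimately show "fscale c f \<in> {fadd a b |a b. a \<in> V \<and> b \<in> W}"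
    using fsubspace_scale[OF V] fsubspace_scale[OF W] by blast
qed

lemma set_plus_f_left: "fsubspace W \<Longrightarrow> a \<in> V \<Longrightarrow> a \<in> set_plus_f V W"
  unfolding set_plus_f_def
  by (intro CollectI exI[of _ a] exI[of _ "\<lambda>_. 0"]) (auto simp: fsubspace_zero fadd_def)

lemma set_plus_f_right: "fsubspace V \<Longrightarrow> b \<in> W \<Longrightarrow> b \<in> set_plus_f V W"
  unfolding set_plus_f_def
  by (intro CollectI exI[of _ "\<lambda>_. 0"] exI[of _ b]) (auto simp: fsubspace_zero fadd_def)

lemma set_plus_f_minimal:
  assumes "fsubspace U" "V \<subseteq> U" "W \<subseteq> U"
  shows "set_plus_f V W \<subseteq> U"
  using assms fsubspace_add[OF assms(1)] unfolding set_plus_f_def by blast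

lemma set_plus_fE:
  assumes "f \<in> set_plus_f V W"
  obtains a b where "a \<in> V" "b \<in> W" "f = fadd a b"
  using assms unfolding set_plus_f_def by blast

lemma fin_supp_zero [simp]: "(\<lambda>_. 0::'k::zero) \<in> fin_supp"
  by (simp add: fin_supp_def)

lemma fin_supp_wd [simp]: "(wd u :: 'g list \<Rightarrow> 'k::zero_neq_one) \<in> fin_supp"
proof -
  have "{w. wd u w \<noteq> (0::'k)} \<subseteq> {u}" by (auto simp: wd_def)
  then show ?thesis unfolding fin_supp_def by (auto intro: finite_subset)
qed

lemma fin_supp_add [simp]:
  fixes f g :: "'g list \<Rightarrow> 'k::field"
  assumes "f \<in> fin_supp" "g \<in> fin_supp"
  shows "fadd f g \<in> fin_supp"
proof -
  have "{w. fadd f g w \<noteq> 0} \<subseteq> {w. f w \<noteq> 0} \<union> {w. g w \<noteq> 0}" by (auto simp: fops_apply)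
  then show ?thesis using assms unfolding fin_supp_def by (auto intro: finite_subset)
qed

lemma fin_supp_scale [simp]:
  fixes f :: "'g list \<Rightarrow> 'k::field"
  assumes "f \<in> fin_supp"
  shows "fscale c f \<in> fin_supp"
proof -
  have "{w. fscale c f w \<noteq> 0} \<subseteq> {w. f w \<noteq> 0}" by (auto simp: fops_apply)
  then show ?thesis using assms unfolding fin_supp_def by (auto intro: finite_subset)
qed

lemma fin_supp_subspace: "fsubspace (fin_supp :: ('g list \<Rightarrow> 'k::field) set)"
  by (simp add: fsubspace_def)

lemma fin_supp_diff [simp]:
  fixes f g :: "'g list \<Rightarrow> 'k::field"
  shows "f \<in> fin_supp \<Longrightarrow> g \<in> fin_supp \<Longrightarrow> fsub f g \<in> fin_supp"
  by (rule fsubspace_diff[OF fin_supp_subspace])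

lemma fin_supp_fsum [simp]:
  fixes F :: "'i \<Rightarrow> 'g list \<Rightarrow> 'k::field"
  shows "(\<And>i. i \<in> A \<Longrightarrow> F i \<in> fin_supp) \<Longrightarrow> fsum F A \<in> fin_supp"
  by (rule fsubspace_fsum[OF fin_supp_subspace])

lemma fin_supp_eq_fsum_wd:
  fixes f :: "'g list \<Rightarrow> 'k::field"
  assumes f: "f \<in> fin_supp"
  shows "f = fsum (\<lambda>v. fscale (f v) (wd v)) {v. f v \<noteq> 0}"
proof (rule ext)
  fix w
  show "f w = fsum (\<lambda>v. fscale (f v) (wd v)) {v. f v \<noteq> 0} w"
  proof (cases "f w = 0")
    case True
    then show ?thesis by (auto simp: fops_apply wd_def intro!: sum.neutral)
  next
    case False
    have "(\<Sum>v\<in>{v. f v \<noteq> 0}. f v * wd v w) = (\<Sum>v\<in>{w}. f v * wd v w)"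
      by (rule sum.mono_neutral_right) (use f False in \<open>auto simp: fin_supp_def wd_def\<close>)
    then show ?thesis by (simp add: wd_def fops_apply)
  qed
qed

lemma fin_supp_in_subspace:
  fixes f :: "'g list \<Rightarrow> 'k::field"
  assumes "fsubspace V" "\<And>w. wd w \<in> V" "f \<in> fin_supp"
  shows "f \<in> V"
  by (subst fin_supp_eq_fsum_wd[OF assms(3)]) (intro fsubspace_fsum fsubspace_scale assms(1,2))

definition fpair :: "('a \<Rightarrow> 'k::field) \<Rightarrow> ('a \<Rightarrow> 'k) \<Rightarrow> 'k" where
  "fpair \<psi> f = (\<Sum>w\<in>{w. f w \<noteq> 0}. f w * \<psi> w)"

lemma fpair_superset: "finite A \<Longrightarrow> {w. f w \<noteq> 0} \<subseteq> A \<Longrightarrow> fpair \<psi> f = (\<Sum>w\<in>A. f w * \<psi> w)"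
  unfolding fpair_def by (rule sum.mono_neutral_left) auto

lemma fpair_add:
  assumes f: "f \<in> fin_supp" and g: "g \<in> fin_supp"
  shows "fpair \<psi> (fadd f g) = fpair \<psi> f + fpair \<psi> g"
proof -
  let ?A = "{w. f w \<noteq> 0} \<union> {w. g w \<noteq> 0}"
  have fin: "finite ?A" using f g by (simp add: fin_supp_def)
  have "fpair \<psi> (fadd f g) = (\<Sum>w\<in>?A. fadd f g w * \<psi> w)"
    by (rule fpair_superset[OF fin]) (auto simp: fops_apply)
  also have "\<dots> = (\<Sum>w\<in>?A. f w * \<psi> w) + (\<Sum>w\<in>?A. g w * \<psi> w)"
    by (simp add: distrib_right sum.distrib fops_apply)
  also have "\<dots> = fpair \<psi> f + fpair \<psi> g"
    using fpair_superset[OF fin, of f \<psi>] fpair_superset[OF fin, of g \<psi>] by auto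
  finally show ?thesis .
qed

lemma fpair_scale: "f \<in> fin_supp \<Longrightarrow> fpair \<psi> (fscale c f) = c * fpair \<psi> f"
  by (subst fpair_superset[of "{w. f w \<noteq> 0}"])
     (auto simp: fin_supp_def fpair_def fops_apply sum_distrib_left mult.assoc)

lemma fpair_diff:
  assumes "f \<in> fin_supp" "g \<in> fin_supp"
  shows "fpair \<psi> (fsub f g) = fpair \<psi> f - fpair \<psi> g"
proof -
  have "fsub f g = fadd f (fscale (-1) g)" by (rule ext) (simp add: fops_apply)
  then show ?thesis using assms by (simp add: fpair_add fpair_scale)
qed

lemma fpair_wd [simp]: "fpair \<psi> (wd u) = \<psi> u"
  by (subst fpair_superset[of "{u}"]) (auto simp: wd_def)

lemma fpair_fsum:
  "finite A \<Longrightarrow> (\<And>i. i \<in> A \<Longrightarrow> F i \<in> fin_supp) \<Longrightarrow> fpair \<psi> (fsum F A) = (\<Sum>i\<in>A. fpair \<psi> (F i))"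
proof (induction A rule: finite_induct)
  case empty
  have "fsum F {} = (\<lambda>_. 0)" by (rule ext) (simp add: fops_apply)
  then show ?case by (simp add: fpair_def)
next
  case (insert x A)
  have "fsum F (insert x A) = fadd (F x) (fsum F A)" by (rule ext) (simp add: fops_apply insert)
  then show ?case using insert by (simp add: fpair_add)
qed

lemma fpair_linear_left:
  "fpair (\<lambda>w. c * \<psi> w) f = c * fpair \<psi> f"
  "fpair (\<lambda>w. \<Sum>i\<in>I. \<Psi> i w) f = (\<Sum>i\<in>I. fpair (\<Psi> i) f)"
  by (simp_all add: fpair_def sum_distrib_left mult.left_commute sum.swap[of _ I])

lemma fpair_cong: "(\<And>w. f w \<noteq> 0 \<Longrightarrow> \<psi>1 w = \<psi>2 w) \<Longrightarrow> fpair \<psi>1 f = fpair \<psi>2 f"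
  unfolding fpair_def by (rule sum.cong) auto

text \<open>\<open>sandwich p q f\<close> is the product \<open>p f q\<close> in the free algebra.\<close>

definition sandwich :: "'g list \<Rightarrow> 'g list \<Rightarrow> ('g list \<Rightarrow> 'k::zero) \<Rightarrow> 'g list \<Rightarrow> 'k" where
  "sandwich p q f w = (if \<exists>s. w = p @ s @ q then f (THE s. w = p @ s @ q) else 0)"

lemma sandwich_app [simp]: "sandwich p q f (p @ s @ q) = f s"
proof -
  have "(THE s'. p @ s @ q = p @ s' @ q) = s" by (rule the_equality) auto
  then show ?thesis unfolding sandwich_def by auto
qed

lemma sandwich_out: "\<not> (\<exists>s. w = p @ s @ q) \<Longrightarrow> sandwich p q f w = 0"
  unfolding sandwich_def by auto

lemma sandwich_linear:
  fixes f g :: "'g list \<Rightarrow> 'k::field"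
  shows "sandwich p q (fadd f g) = fadd (sandwich p q f) (sandwich p q g)"
    and "sandwich p q (fsub f g) = fsub (sandwich p q f) (sandwich p q g)"
    and "sandwich p q (fscale c f) = fscale c (sandwich p q f)"
    and "sandwich p q (fsum F A) = fsum (\<lambda>i. sandwich p q (F i)) A"
    and "sandwich p q (\<lambda>_. 0) = (\<lambda>_. 0)"
  by (simp_all add: fun_eq_iff sandwich_def fops_apply)

lemma sandwich_wd: "sandwich p q (wd s) = wd (p @ s @ q)"
proof (rule ext)
  fix w
  show "sandwich p q (wd s) w = wd (p @ s @ q) w"
    by (cases "\<exists>s. w = p @ s @ q") (auto simp: sandwich_out wd_apply split: if_splits)
qed

lemma sandwich_sandwich: "sandwich p' q' (sandwich p q f) = sandwich (p' @ p) (q @ q') f"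
proof (rule ext)
  fix w
  show "sandwich p' q' (sandwich p q f) w = sandwich (p' @ p) (q @ q') f w"
  proof (cases "\<exists>s. w = p' @ p @ s @ q @ q'")
    case True
    then obtain s where w: "w = p' @ (p @ s @ q) @ q'" by auto
    have "w = (p' @ p) @ s @ (q @ q')" using w by simp
    then show ?thesis using w by (metis sandwich_app)
  next
    case False
    then show ?thesis
      by (cases "\<exists>s. w = p' @ s @ q'") (auto simp: sandwich_out)
  qed
qed

lemma sandwich_support:
  "{w. sandwich p q f w \<noteq> 0} = (\<lambda>s. p @ s @ q) ` {s. f s \<noteq> 0}"
proof
  show "{w. sandwich p q f w \<noteq> 0} \<subseteq> (\<lambda>s. p @ s @ q) ` {s. f s \<noteq> 0}"
  proof
    fix w assume "w \<in> {w. sandwich p q f w \<noteq> 0}"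
    then show "w \<in> (\<lambda>s. p @ s @ q) ` {s. f s \<noteq> 0}"
      by (cases "\<exists>s. w = p @ s @ q") (auto simp: sandwich_out)
  qed
qed auto

lemma fin_supp_sandwich [simp]: "f \<in> fin_supp \<Longrightarrow> sandwich p q f \<in> fin_supp"
  by (simp add: fin_supp_def sandwich_support)

lemma fpair_sandwich:
  "fpair \<psi> (sandwich p q f) = fpair (\<lambda>s. \<psi> (p @ s @ q)) f"
proof -
  have "inj_on (\<lambda>s. p @ s @ q) {s. f s \<noteq> 0}" by (auto simp: inj_on_def)
  then show ?thesis unfolding fpair_def sandwich_support by (simp add: sum.reindex)
qed

lemma wmult_expand_left:
  fixes a f :: "'g list \<Rightarrow> 'k::field"
  assumes a: "a \<in> fin_supp"
  shows "wmult a f = fsum (\<lambda>u. fscale (a u) (sandwich u [] f)) {u. a u \<noteq> 0}"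
proof (rule ext)
  fix w :: "'g list"
  let ?P = "(\<lambda>i. take i w) ` {..length w}"
  have inj: "inj_on (\<lambda>i. take i w) {..length w}"
    by (auto simp: inj_on_def) (metis length_take min.absorb2)
  have "wmult a f w = (\<Sum>i\<le>length w. a (take i w) * f (drop (length (take i w)) w))"
    unfolding wmult_def by (rule sum.cong) auto
  also have "\<dots> = (\<Sum>u\<in>?P. a u * f (drop (length u) w))"
    by (simp add: sum.reindex[OF inj])
  also have "\<dots> = (\<Sum>u\<in>?P \<union> {u. a u \<noteq> 0}. a u * sandwich u [] f w)"
  proof (rule sum.mono_neutral_cong_left)
    show "finite (?P \<union> {u. a u \<noteq> 0})" using a by (simp add: fin_supp_def)
    show "?P \<subseteq> ?P \<union> {u. a u \<noteq> 0}" by auto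
    show "\<forall>i\<in>?P \<union> {u. a u \<noteq> 0} - ?P. a i * sandwich i [] f w = 0"
    proof
      fix u assume u: "u \<in> ?P \<union> {u. a u \<noteq> 0} - ?P"
      have "\<not> (\<exists>s. w = u @ s @ [])"
      proof
        assume "\<exists>s. w = u @ s @ []"
        then obtain s where "w = u @ s" by auto
        then have "u = take (length u) w" "length u \<le> length w" by auto
        then show False using u by auto
      qed
      then show "a u * sandwich u [] f w = 0" by (simp add: sandwich_out)
    qed
    fix u assume "u \<in> ?P"
    then obtain i where i: "i \<le> length w" "u = take i w" by auto
    then have "w = u @ drop i w @ []" by simp
    then have "sandwich u [] f w = f (drop i w)" by (metis sandwich_app)
    then show "a u * f (drop (length u) w) = a u * sandwich u [] f w" using i by simp
  qed
  also have "\<dots> = (\<Sum>u\<in>{u. a u \<noteq> 0}. a u * sandwich u [] f w)"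
    by (rule sum.mono_neutral_right) (use a in \<open>auto simp: fin_supp_def\<close>)
  finally show "wmult a f w = fsum (\<lambda>u. fscale (a u) (sandwich u [] f)) {u. a u \<noteq> 0} w"
    by (simp add: fops_apply)
qed

lemma wmult_expand_right:
  fixes b f :: "'g list \<Rightarrow> 'k::field"
  assumes b: "b \<in> fin_supp"
  shows "wmult f b = fsum (\<lambda>v. fscale (b v) (sandwich [] v f)) {v. b v \<noteq> 0}"
proof (rule ext)
  fix w :: "'g list"
  let ?P = "(\<lambda>i. drop i w) ` {..length w}"
  have inj: "inj_on (\<lambda>i. drop i w) {..length w}"
    by (auto simp: inj_on_def) (metis diff_diff_cancel length_drop)
  have "wmult f b w = (\<Sum>i\<le>length w. b (drop i w) * f (take (length w - length (drop i w)) w))"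
    unfolding wmult_def by (rule sum.cong) (auto simp: mult.commute)
  also have "\<dots> = (\<Sum>v\<in>?P. b v * f (take (length w - length v) w))"
    by (simp add: sum.reindex[OF inj])
  also have "\<dots> = (\<Sum>v\<in>?P \<union> {v. b v \<noteq> 0}. b v * sandwich [] v f w)"
  proof (rule sum.mono_neutral_cong_left)
    show "finite (?P \<union> {v. b v \<noteq> 0})" using b by (simp add: fin_supp_def)
    show "?P \<subseteq> ?P \<union> {v. b v \<noteq> 0}" by auto
    show "\<forall>i\<in>?P \<union> {v. b v \<noteq> 0} - ?P. b i * sandwich [] i f w = 0"
    proof
      fix v assume v: "v \<in> ?P \<union> {v. b v \<noteq> 0} - ?P"
      have "\<not> (\<exists>s. w = [] @ s @ v)"
      proof
        assume "\<exists>s. w = [] @ s @ v"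
        then obtain s where "w = s @ v" by auto
        then have "v = drop (length s) w" "length s \<le> length w" by auto
        then show False using v by auto
      qed
      then show "b v * sandwich [] v f w = 0" by (simp add: sandwich_out)
    qed
    fix v assume "v \<in> ?P"
    then obtain i where i: "i \<le> length w" "v = drop i w" by auto
    then have "w = [] @ take i w @ v" by simp
    then have "sandwich [] v f w = f (take i w)" by (metis sandwich_app)
    then show "b v * f (take (length w - length v) w) = b v * sandwich [] v f w" using i by simp
  qed
  also have "\<dots> = (\<Sum>v\<in>{v. b v \<noteq> 0}. b v * sandwich [] v f w)"
    by (rule sum.mono_neutral_right) (use b in \<open>auto simp: fin_supp_def\<close>)
  finally show "wmult f b w = fsum (\<lambda>v. fscale (b v) (sandwich [] v f)) {v. b v \<noteq> 0} w"
    by (simp add: fops_apply)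
qed

lemma wmult_wd_left:
  fixes f :: "'g list \<Rightarrow> 'k::field"
  shows "wmult (wd p) f = sandwich p [] f"
proof -
  have e: "{u. wd p u \<noteq> (0::'k)} = {p}" by (auto simp: wd_def)
  show ?thesis by (subst wmult_expand_left) (auto simp: fops_apply e wd_apply intro!: ext)
qed

lemma wmult_wd_right:
  fixes f :: "'g list \<Rightarrow> 'k::field"
  shows "wmult f (wd q) = sandwich [] q f"
proof -
  have e: "{u. wd q u \<noteq> (0::'k)} = {q}" by (auto simp: wd_def)
  show ?thesis by (subst wmult_expand_right) (auto simp: fops_apply e wd_apply intro!: ext)
qed

lemma wmult_expand:
  fixes a b :: "'g list \<Rightarrow> 'k::field"
  assumes a: "a \<in> fin_supp" and b: "b \<in> fin_supp"
  shows "wmult a b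
    = fsum (\<lambda>u. fscale (a u) (fsum (\<lambda>v. fscale (b v) (wd (u @ v))) {v. b v \<noteq> 0})) {u. a u \<noteq> 0}"
proof -
  have "sandwich u [] b = fsum (\<lambda>v. fscale (b v) (wd (u @ v))) {v. b v \<noteq> 0}" for u
    by (subst fin_supp_eq_fsum_wd[OF b]) (simp add: sandwich_linear sandwich_wd)
  then show ?thesis by (simp add: wmult_expand_left[OF a])
qed

definition ue_ideal_gens ::
    "('k::field \<Rightarrow> 'g \<Rightarrow> 'g::ab_group_add) \<Rightarrow> ('g \<Rightarrow> 'g \<Rightarrow> 'g) \<Rightarrow> ('g list \<Rightarrow> 'k) set" where
  "ue_ideal_gens sc br = {sandwich p q r | p q r. r \<in> ue_rels sc br}"

lemma ue_rels_fin_supp: "r \<in> ue_rels sc br \<Longrightarrow> r \<in> fin_supp"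
  unfolding ue_rels_def by auto

lemma ue_ideal_subspace: "fsubspace (ue_ideal sc br)"
  unfolding ue_ideal_def by (rule fspan_subspace)

lemma ue_ideal_gens_subset: "ue_ideal_gens sc br \<subseteq> ue_ideal sc br"
proof
  fix f assume "f \<in> ue_ideal_gens sc br"
  then obtain p q r where f: "f = sandwich p q r" and r: "r \<in> ue_rels sc br"
    unfolding ue_ideal_gens_def by blast
  have "f = wmult (wmult (wd p) r) (wd q)"
    by (simp add: f wmult_wd_left wmult_wd_right sandwich_sandwich)
  then show "f \<in> ue_ideal sc br"
    unfolding ue_ideal_def using r fin_supp_wd by (intro fspan_superset) blast
qed

lemma ue_ideal_eq_fspan_gens: "ue_ideal sc br = fspan (ue_ideal_gens sc br)"
proof
  show "fspan (ue_ideal_gens sc br) \<subseteq> ue_ideal sc br"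
    by (rule fspan_minimal[OF ue_ideal_subspace ue_ideal_gens_subset])
  show "ue_ideal sc br \<subseteq> fspan (ue_ideal_gens sc br)"
    unfolding ue_ideal_def
  proof (rule fspan_minimal[OF fspan_subspace], rule subsetI)
    fix g assume "g \<in> {wmult (wmult a r) b |a r b. a \<in> fin_supp \<and> r \<in> ue_rels sc br \<and> b \<in> fin_supp}"
    then obtain a r b where g: "g = wmult (wmult a r) b"
      and a: "a \<in> fin_supp" and r: "r \<in> ue_rels sc br" and b: "b \<in> fin_supp"
      by blast
    have "g = fsum (\<lambda>v. fscale (b v) (fsum (\<lambda>u. fscale (a u) (sandwich u v r)) {u. a u \<noteq> 0}))
        {v. b v \<noteq> 0}"
      by (simp add: g wmult_expand_right[OF b] wmult_expand_left[OF a] sandwich_linear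
          sandwich_sandwich)
    moreover have "sandwich u v r \<in> fspan (ue_ideal_gens sc br)" for u v
      by (rule fspan_superset) (use r in \<open>auto simp: ue_ideal_gens_def\<close>)
    ultimately show "g \<in> fspan (ue_ideal_gens sc br)"
      by (simp add: fsubspace_fsum fsubspace_scale fspan_subspace)
  qed
qed

lemma ue_ideal_sandwich:
  assumes "f \<in> ue_ideal sc br"
  shows "sandwich p q f \<in> ue_ideal sc br"
proof -
  let ?V = "{f. sandwich p q f \<in> ue_ideal sc br}"
  have "fsubspace ?V"
    unfolding fsubspace_def
    by (simp add: sandwich_linear fsubspace_zero fsubspace_add fsubspace_scale ue_ideal_subspace)
  moreover have "ue_ideal_gens sc br \<subseteq> ?V"
    using ue_ideal_gens_subset by (fastforce simp: ue_ideal_gens_def sandwich_sandwich)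
  ultimately show ?thesis
    using fspan_minimal assms ue_ideal_eq_fspan_gens by blast
qed

lemma ue_ideal_rel_sandwich: "r \<in> ue_rels sc br \<Longrightarrow> sandwich p q r \<in> ue_ideal sc br"
  using ue_ideal_gens_subset unfolding ue_ideal_gens_def by blast

lemma ue_ideal_add_letter:
  "fsub (fsub (wd (p @ [x + y] @ q)) (wd (p @ [x] @ q))) (wd (p @ [y] @ q)) \<in> ue_ideal sc br"
proof -
  have "fsub (fsub (wd [x + y]) (wd [x])) (wd [y]) \<in> ue_rels sc br" unfolding ue_rels_def by blast
  from ue_ideal_rel_sandwich[OF this, of p q] show ?thesis
    by (simp add: sandwich_linear sandwich_wd)
qed

lemma ue_ideal_scale_letter:
  "fsub (wd (p @ [sc c x] @ q)) (fscale c (wd (p @ [x] @ q))) \<in> ue_ideal sc br"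
proof -
  have "fsub (wd [sc c x]) (fscale c (wd [x])) \<in> ue_rels sc br" unfolding ue_rels_def by blast
  from ue_ideal_rel_sandwich[OF this, of p q] show ?thesis
    by (simp add: sandwich_linear sandwich_wd)
qed

lemma ue_ideal_commutator_letters:
  "fsub (fsub (wd (p @ [x, y] @ q)) (wd (p @ [y, x] @ q))) (wd (p @ [br x y] @ q)) \<in> ue_ideal sc br"
proof -
  have "fsub (fsub (wd [x, y]) (wd [y, x])) (wd [br x y]) \<in> ue_rels sc br"
    unfolding ue_rels_def by blast
  from ue_ideal_rel_sandwich[OF this, of p q] show ?thesis
    by (simp add: sandwich_linear sandwich_wd)
qed

lemma fpair_ue_ideal:
  assumes vanish: "\<And>p q r. r \<in> ue_rels sc br \<Longrightarrow> fpair (\<lambda>s. \<psi> (p @ s @ q)) r = 0"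
    and f: "f \<in> ue_ideal sc br"
  shows "fpair \<psi> f = 0"
proof -
  let ?V = "{f. f \<in> fin_supp \<and> fpair \<psi> f = 0}"
  have "fsubspace ?V"
    unfolding fsubspace_def by (auto simp: fpair_add fpair_scale) (simp add: fpair_def)
  moreover have "ue_ideal_gens sc br \<subseteq> ?V"
  proof
    fix g assume "g \<in> ue_ideal_gens sc br"
    then obtain p q r where "g = sandwich p q r" "r \<in> ue_rels sc br"
      unfolding ue_ideal_gens_def by blast
    then show "g \<in> ?V" using vanish ue_rels_fin_supp[of r sc br] by (simp add: fpair_sandwich)
  qed
  ultimately show ?thesis
    using fspan_minimal f ue_ideal_eq_fspan_gens by blast
qed

lemma comm_span_subspace: "fsubspace comm_span"
  unfolding comm_span_def by (rule fspan_subspace)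

lemma trace_kernel_subspace: "fsubspace (trace_kernel sc br)"
  unfolding trace_kernel_def by (rule set_plus_f_subspace[OF ue_ideal_subspace comm_span_subspace])

lemma ue_ideal_subset_trace_kernel: "f \<in> ue_ideal sc br \<Longrightarrow> f \<in> trace_kernel sc br"
  unfolding trace_kernel_def by (rule set_plus_f_left[OF comm_span_subspace])

lemma comm_span_subset_trace_kernel: "f \<in> comm_span \<Longrightarrow> f \<in> trace_kernel sc br"
  unfolding trace_kernel_def by (rule set_plus_f_right[OF ue_ideal_subspace])

definition homog :: "nat \<Rightarrow> ('g list \<Rightarrow> 'k::field) set" where
  "homog m = {f. f \<in> fin_supp \<and> (\<forall>w. f w \<noteq> 0 \<longrightarrow> length w = m)}"

lemma homog_subspace: "fsubspace (homog m)"
  unfolding fsubspace_def homog_def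
proof (intro conjI ballI allI)
  fix f g :: "'a list \<Rightarrow> 'b" assume f: "f \<in> {f \<in> fin_supp. \<forall>w. f w \<noteq> 0 \<longrightarrow> length w = m}"
    and g: "g \<in> {f \<in> fin_supp. \<forall>w. f w \<noteq> 0 \<longrightarrow> length w = m}"
  have "fadd f g w \<noteq> 0 \<longrightarrow> length w = m" for w
    using f g by (cases "f w = 0") (auto simp: fops_apply)
  then show "fadd f g \<in> {f \<in> fin_supp. \<forall>w. f w \<noteq> 0 \<longrightarrow> length w = m}" using f g by auto
qed (auto simp: fin_supp_def fops_apply)

lemma fin_supp_symz: "symz xs \<in> fin_supp"
  unfolding symz_def by (intro fin_supp_scale fin_supp_fsum fin_supp_wd)

lemma symz_homog: "(symz xs :: 'g list \<Rightarrow> 'k::field_char_0) \<in> homog (length xs)"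
proof -
  have "(symz xs :: 'g list \<Rightarrow> 'k) w = 0" if "length w \<noteq> length xs" for w
    using that by (auto simp: symz_def fops_apply wd_apply intro!: sum.neutral)
  then show ?thesis using fin_supp_symz by (auto simp: homog_def)
qed

lemma sym_sub_homog: "sym_sub m \<subseteq> homog m"
  unfolding sym_sub_def by (rule fspan_minimal[OF homog_subspace]) (auto intro: symz_homog)

lemma sym_sub_fin_supp: "f \<in> sym_sub m \<Longrightarrow> f \<in> fin_supp"
  using sym_sub_homog by (auto simp: homog_def)

lemma sym_sub_subspace: "fsubspace (sym_sub m)"
  unfolding sym_sub_def by (rule fspan_subspace)

lemma symz_in_sym_sub: "length xs = m \<Longrightarrow> symz xs \<in> sym_sub m"
  unfolding sym_sub_def by (rule fspan_superset) blast

definition no_descent :: "('g \<Rightarrow> 'g \<Rightarrow> bool) \<Rightarrow> 'g list \<Rightarrow> bool" where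
  "no_descent lt xs \<longleftrightarrow> (\<forall>i. Suc i < length xs \<longrightarrow> \<not> lt (xs ! Suc i) (xs ! i))"

definition first_descent :: "('g \<Rightarrow> 'g \<Rightarrow> bool) \<Rightarrow> 'g list \<Rightarrow> nat" where
  "first_descent lt xs = (LEAST i. Suc i < length xs \<and> lt (xs ! Suc i) (xs ! i))"

definition swap_at :: "nat \<Rightarrow> 'g list \<Rightarrow> 'g list" where
  "swap_at i w = take i w @ w ! Suc i # w ! i # drop (Suc (Suc i)) w"

fun inv_count :: "('g \<Rightarrow> 'g \<Rightarrow> bool) \<Rightarrow> 'g list \<Rightarrow> nat" where
  "inv_count lt [] = 0"
| "inv_count lt (x # xs) = length (filter (\<lambda>y. lt y x) xs) + inv_count lt xs"

lemma inv_count_swap: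
  assumes "lt b a" "\<not> lt a b"
  shows "inv_count lt (u @ a # b # v) = Suc (inv_count lt (u @ b # a # v))"
  using assms by (induction u) auto

lemma first_descentD:
  assumes "\<not> no_descent lt w"
  shows "Suc (first_descent lt w) < length w"
    and "lt (w ! Suc (first_descent lt w)) (w ! first_descent lt w)"
    and "\<And>i. i < first_descent lt w \<Longrightarrow> \<not> lt (w ! Suc i) (w ! i)"
proof -
  obtain i where i: "Suc i < length w \<and> lt (w ! Suc i) (w ! i)"
    using assms by (auto simp: no_descent_def)
  show "Suc (first_descent lt w) < length w" "lt (w ! Suc (first_descent lt w)) (w ! first_descent lt w)"
    unfolding first_descent_def
    using LeastI[of "\<lambda>i. Suc i < length w \<and> lt (w ! Suc i) (w ! i)", OF i] by auto
  fix j assume j: "j < first_descent lt w"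
  show "\<not> lt (w ! Suc j) (w ! j)"
  proof
    assume "lt (w ! Suc j) (w ! j)"
    moreover have "Suc j < length w" using j \<open>Suc (first_descent lt w) < length w\<close> by simp
    ultimately have "first_descent lt w \<le> j" unfolding first_descent_def by (intro Least_le) simp
    then show False using j by simp
  qed
qed

lemma take_nth_nth_drop:
  "Suc i < length w \<Longrightarrow> w = take i w @ w ! i # w ! Suc i # drop (Suc (Suc i)) w"
  by (metis Cons_nth_drop_Suc Suc_lessD append_take_drop_id)

lemma length_swap_at: "Suc i < length w \<Longrightarrow> length (swap_at i w) = length w"
  by (simp add: swap_at_def)

lemma not_no_descentE:
  assumes "\<not> no_descent lt xs"
  obtains u1 c d r where "xs = u1 @ c # d # r" "lt d c" "no_descent lt (u1 @ [c])"
proof -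
  let ?i = "first_descent lt xs"
  have xs: "xs = take ?i xs @ xs ! ?i # xs ! Suc ?i # drop (Suc (Suc ?i)) xs"
    using first_descentD(1)[OF assms] by (rule take_nth_nth_drop)
  have "no_descent lt (take ?i xs @ [xs ! ?i])"
    unfolding no_descent_def
  proof (intro allI impI)
    fix j assume j: "Suc j < length (take ?i xs @ [xs ! ?i])"
    then have j': "j < ?i" "Suc ?i < length xs" using first_descentD(1)[OF assms] by auto
    have "(take ?i xs @ [xs ! ?i]) ! j = xs ! j" using j' by (simp add: nth_append)
    moreover have "(take ?i xs @ [xs ! ?i]) ! Suc j = xs ! Suc j"
      using j' by (cases "Suc j = ?i") (auto simp: nth_append)
    ultimately show "\<not> lt ((take ?i xs @ [xs ! ?i]) ! Suc j) ((take ?i xs @ [xs ! ?i]) ! j)"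
      using first_descentD(3)[OF assms j'(1)] by simp
  qed
  then show ?thesis using that xs first_descentD(2)[OF assms] by blast
qed

lemma first_descent_eq:
  assumes ba: "lt b a" and ni: "no_descent lt (u @ [a])"
  shows "first_descent lt (u @ a # b # v) = length u"
  unfolding first_descent_def
proof (rule Least_equality)
  let ?w = "u @ a # b # v"
  show "Suc (length u) < length ?w \<and> lt (?w ! Suc (length u)) (?w ! length u)"
    using ba by (simp add: nth_append)
  fix j assume j: "Suc j < length ?w \<and> lt (?w ! Suc j) (?w ! j)"
  show "length u \<le> j"
  proof (rule ccontr)
    assume "\<not> length u \<le> j"
    then have "?w ! j = (u @ [a]) ! j" "?w ! Suc j = (u @ [a]) ! Suc j" by (auto simp: nth_append)
    then show False using ni j \<open>\<not> length u \<le> j\<close> unfolding no_descent_def by auto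
  qed
qed

locale lie =
  fixes sc :: "'k::field_char_0 \<Rightarrow> 'g::ab_group_add \<Rightarrow> 'g"
    and br :: "'g \<Rightarrow> 'g \<Rightarrow> 'g"
  assumes lie_algebra: "lie_algebra sc br"
begin

lemma module_sc: "module sc"
  using lie_algebra by (simp add: lie_algebra_def)

lemma br_add_left: "br (x + y) z = br x z + br y z"
  and br_add_right: "br x (y + z) = br x y + br x z"
  and br_scale_left: "br (sc c x) y = sc c (br x y)"
  and br_scale_right: "br x (sc c y) = sc c (br x y)"
  and br_self: "br x x = 0"
  and jacobi: "br x (br y z) + br y (br z x) + br z (br x y) = 0"
  using lie_algebra by (simp_all add: lie_algebra_def)

lemma br_zero_left: "br 0 z = 0"
  using br_add_left[of 0 0 z] by simp

lemma br_zero_right: "br z 0 = 0"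
  using br_add_right[of z 0 0] by simp

lemma br_antisym: "br y x = - br x y"
proof -
  have "0 = br (x + y) (x + y)" by (rule br_self[symmetric])
  also have "\<dots> = (br x x + br x y) + (br y x + br y y)"
    by (simp add: br_add_left br_add_right ac_simps)
  also have "\<dots> = br x y + br y x" by (simp add: br_self)
  finally show ?thesis by (simp add: eq_neg_iff_add_eq_0 add.commute)
qed

lemma br_minus_right: "br x (- y) = - br x y"
  using br_add_right[of x y "- y"] by (simp add: br_zero_right eq_neg_iff_add_eq_0 add.commute)

lemma br_sum_left: "br (sum f A) y = (\<Sum>i\<in>A. br (f i) y)"
  by (induction A rule: infinite_finite_induct) (auto simp: br_zero_left br_add_left)

lemma br_sum_right: "br y (sum f A) = (\<Sum>i\<in>A. br y (f i))"
  by (induction A rule: infinite_finite_induct) (auto simp: br_zero_right br_add_right)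

lemma jacobi_nested: "br (br a b) c + br (br c a) b - br (br c b) a = 0"
proof -
  have "br (br a b) c + br (br c a) b - br (br c b) a
      = - (br a (br b c) + br b (br c a) + br c (br a b))"
    using br_antisym[of c "br a b"] br_antisym[of b "br c a"] br_antisym[of b c]
      br_minus_right[of a "br b c"] br_antisym[of a "br c b"]
    by (simp add: algebra_simps)
  then show ?thesis using jacobi[of a b c] by simp
qed

end

text \<open>Only the restriction of \<open>lt\<close> to \<open>B\<close> matters: it decides which monomials are ordered.\<close>

locale pbw_basis = lie sc br
  for sc :: "'k::field_char_0 \<Rightarrow> 'g::ab_group_add \<Rightarrow> 'g" and br +
  fixes B :: "'g set"
    and lt :: "'g \<Rightarrow> 'g \<Rightarrow> bool"
  assumes independent: "\<not> module.dependent sc B"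
    and span_B: "module.span sc B = UNIV"
    and lt_irrefl: "\<not> lt a a"
    and lt_trans: "lt a b \<Longrightarrow> lt b c \<Longrightarrow> lt a c"
    and lt_total: "a \<noteq> b \<Longrightarrow> lt a b \<or> lt b a"
begin

abbreviation coord :: "'g \<Rightarrow> 'g \<Rightarrow> 'k" where
  "coord x \<equiv> module.representation sc B x"

abbreviation csupp :: "'g \<Rightarrow> 'g set" where
  "csupp x \<equiv> {e. coord x e \<noteq> 0}"

lemma in_span: "x \<in> module.span sc B"
  using span_B by simp

lemma finite_csupp [simp]: "finite (csupp x)"
  by (rule module.finite_representation[OF module_sc])

lemma coord_add: "coord (x + y) = (\<lambda>e. coord x e + coord y e)"
  by (rule module.representation_add[OF module_sc independent in_span in_span])

lemma coord_scale: "coord (sc c x) = (\<lambda>e. c * coord x e)"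
  by (rule module.representation_scale[OF module_sc independent in_span])

lemma coord_zero: "coord 0 = (\<lambda>e. 0)"
  by (rule module.representation_zero[OF module_sc])

lemma sum_coord_scale: "(\<Sum>e\<in>csupp x. sc (coord x e) e) = x"
  by (rule module.sum_nonzero_representation_eq[OF module_sc independent in_span])

definition lin_ext :: "('g \<Rightarrow> 'k) \<Rightarrow> 'g \<Rightarrow> 'k" where
  "lin_ext h x = (\<Sum>e\<in>csupp x. coord x e * h e)"

lemma lin_ext_superset: "finite A \<Longrightarrow> csupp x \<subseteq> A \<Longrightarrow> lin_ext h x = (\<Sum>e\<in>A. coord x e * h e)"
  unfolding lin_ext_def by (rule sum.mono_neutral_left) auto

lemma lin_ext_add: "lin_ext h (x + y) = lin_ext h x + lin_ext h y"
proof -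
  let ?A = "csupp x \<union> csupp y \<union> csupp (x + y)"
  have "lin_ext h (x + y) = (\<Sum>e\<in>?A. coord (x + y) e * h e)" by (rule lin_ext_superset) auto
  also have "\<dots> = (\<Sum>e\<in>?A. coord x e * h e) + (\<Sum>e\<in>?A. coord y e * h e)"
    by (simp add: coord_add distrib_right sum.distrib)
  also have "\<dots> = lin_ext h x + lin_ext h y"
    by (subst (1 2) lin_ext_superset[of ?A]) auto
  finally show ?thesis .
qed

lemma lin_ext_scale: "lin_ext h (sc c x) = c * lin_ext h x"
proof -
  let ?A = "csupp x \<union> csupp (sc c x)"
  have "lin_ext h (sc c x) = (\<Sum>e\<in>?A. coord (sc c x) e * h e)" by (rule lin_ext_superset) auto
  also have "\<dots> = c * lin_ext h x"
    by (subst lin_ext_superset[of ?A]) (auto simp: coord_scale sum_distrib_left mult.assoc)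
  finally show ?thesis .
qed

lemma lin_ext_zero: "lin_ext h 0 = 0"
  by (simp add: lin_ext_def coord_zero)

lemma lin_ext_minus: "lin_ext h (- x) = - lin_ext h x"
  using lin_ext_add[of h x "- x"] by (simp add: lin_ext_zero eq_neg_iff_add_eq_0 add.commute)

lemma lin_ext_diff: "lin_ext h (x - y) = lin_ext h x - lin_ext h y"
  using lin_ext_add[of h x "- y"] lin_ext_minus[of h y] by simp

lemma lin_ext_linear_fun:
  "lin_ext (\<lambda>e. h1 e + h2 e) x = lin_ext h1 x + lin_ext h2 x"
  "lin_ext (\<lambda>e. h1 e - h2 e) x = lin_ext h1 x - lin_ext h2 x"
  "lin_ext (\<lambda>e. c * h e) x = c * lin_ext h x"
  "lin_ext (\<lambda>e. \<Sum>i\<in>I. H i e) x = (\<Sum>i\<in>I. lin_ext (H i) x)"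
  by (simp_all add: lin_ext_def distrib_left sum.distrib right_diff_distrib sum_subtractf
      sum_distrib_left mult.left_commute sum.swap[of _ I])

lemma lin_ext_sum: "lin_ext h (sum f A) = (\<Sum>i\<in>A. lin_ext h (f i))"
  by (induction A rule: infinite_finite_induct) (simp_all add: lin_ext_zero lin_ext_add)

lemma lin_ext_swap:
  "lin_ext (\<lambda>e. lin_ext (H e) y) x = lin_ext (\<lambda>f. lin_ext (\<lambda>e. H e f) x) y"
  by (simp add: lin_ext_def sum_distrib_left sum.swap[of _ "csupp y"] mult.left_commute)

lemma lin_ext_br_left: "lin_ext h (br x y) = lin_ext (\<lambda>e. lin_ext h (br e y)) x"
proof -
  have "br x y = (\<Sum>e\<in>csupp x. sc (coord x e) (br e y))"
    by (subst sum_coord_scale[symmetric, of x]) (simp add: br_sum_left br_scale_left)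
  then show ?thesis
    by (simp add: lin_ext_sum lin_ext_scale lin_ext_def[where h = "\<lambda>e. lin_ext h (br e y)"])
qed

lemma lin_ext_br_right: "lin_ext h (br y x) = lin_ext (\<lambda>e. lin_ext h (br y e)) x"
proof -
  have "br y x = (\<Sum>e\<in>csupp x. sc (coord x e) (br y e))"
    by (subst sum_coord_scale[symmetric, of x]) (simp add: br_sum_right br_scale_right)
  then show ?thesis
    by (simp add: lin_ext_sum lin_ext_scale lin_ext_def[where h = "\<lambda>e. lin_ext h (br y e)"])
qed

lemma lt_asym: "lt a b \<Longrightarrow> \<not> lt b a"
  using lt_irrefl lt_trans by blast

lemma inv_count_swap': "lt b a \<Longrightarrow> inv_count lt (u @ a # b # v) = Suc (inv_count lt (u @ b # a # v))"
  by (rule inv_count_swap) (auto dest: lt_asym)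

lemma inv_count_swap_at:
  assumes "\<not> no_descent lt w"
  shows "inv_count lt (swap_at (first_descent lt w) w) < inv_count lt w"
proof -
  let ?i = "first_descent lt w"
  have w: "w = take ?i w @ w ! ?i # w ! Suc ?i # drop (Suc (Suc ?i)) w"
    using first_descentD(1)[OF assms] by (rule take_nth_nth_drop)
  have "inv_count lt w = Suc (inv_count lt (swap_at ?i w))"
    using inv_count_swap'[OF first_descentD(2)[OF assms], of "take ?i w" "drop (Suc (Suc ?i)) w"]
    unfolding swap_at_def using w by simp
  then show ?thesis by simp
qed

section \<open>The PBW coefficient functionals\<close>

text \<open>\<open>pbw_coeff M w\<close> is the coefficient of the ordered monomial with multiset of factors \<open>M\<close> in
  the PBW normal form of the word \<open>w\<close> of basis vectors: the first descent \<open>a b\<close> of \<open>w\<close> is rewritten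
  to \<open>b a + [a, b]\<close>.\<close>

function pbw_coeff :: "'g multiset \<Rightarrow> 'g list \<Rightarrow> 'k" where
  "pbw_coeff M w = (if no_descent lt w then (if mset w = M then 1 else 0)
     else let i = first_descent lt w in pbw_coeff M (swap_at i w) +
       (\<Sum>e\<in>csupp (br (w ! i) (w ! Suc i)). coord (br (w ! i) (w ! Suc i)) e *
          pbw_coeff M (take i w @ e # drop (Suc (Suc i)) w)))"
  by auto
termination
proof (relation "measures [\<lambda>(M, w). length w, \<lambda>(M, w). inv_count lt w]")
  fix M w i assume a: "\<not> no_descent lt w" and i: "i = first_descent lt w"
  show "((M, swap_at i w), M, w) \<in> measures [\<lambda>(M, w). length w, \<lambda>(M, w). inv_count lt w]"
    using length_swap_at[OF first_descentD(1)[OF a]] inv_count_swap_at[OF a] i by simp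
  fix e
  show "((M, take i w @ e # drop (Suc (Suc i)) w), M, w)
    \<in> measures [\<lambda>(M, w). length w, \<lambda>(M, w). inv_count lt w]"
  proof -
    have "Suc (length w - 2) < length w" using first_descentD(1)[OF a] by linarith
    then show ?thesis using first_descentD(1)[OF a] i by simp
  qed
qed simp

declare pbw_coeff.simps [simp del]

definition pbw_coeff_mid :: "'g multiset \<Rightarrow> 'g list \<Rightarrow> 'g \<Rightarrow> 'g list \<Rightarrow> 'k" where
  "pbw_coeff_mid M u x v = lin_ext (\<lambda>e. pbw_coeff M (u @ e # v)) x"

lemma pbw_coeff_no_descent: "no_descent lt w \<Longrightarrow> pbw_coeff M w = (if mset w = M then 1 else 0)"
  by (simp add: pbw_coeff.simps)

lemma pbw_coeff_first_descent:
  assumes "lt b a" "no_descent lt (u @ [a])"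
  shows "pbw_coeff M (u @ a # b # v) = pbw_coeff M (u @ b # a # v) + pbw_coeff_mid M u (br a b) v"
proof -
  have "\<not> no_descent lt (u @ a # b # v)"
    using assms(1) unfolding no_descent_def by (auto simp: nth_append intro!: exI[of _ "length u"])
  then show ?thesis
    by (subst pbw_coeff.simps)
       (simp add: first_descent_eq[OF assms] swap_at_def nth_append pbw_coeff_mid_def lin_ext_def)
qed

lemma pbw_coeff_top: "length w \<le> size M \<Longrightarrow> pbw_coeff M w = (if mset w = M then 1 else 0)"
proof (induction M w rule: pbw_coeff.induct)
  case (1 M w)
  show ?case
  proof (cases "no_descent lt w")
    case True
    then show ?thesis by (simp add: pbw_coeff_no_descent)
  next
    case False
    define i where "i = first_descent lt w"
    have il: "Suc i < length w" unfolding i_def by (rule first_descentD(1)[OF False])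
    have "mset (swap_at i w) = mset w"
      by (subst (2) take_nth_nth_drop[OF il]) (simp add: swap_at_def)
    then have swap: "pbw_coeff M (swap_at i w) = (if mset w = M then 1 else 0)"
      using "1.IH"(1)[OF False i_def] "1.prems" length_swap_at[OF il] by simp
    have shorter: "pbw_coeff M (take i w @ e # drop (Suc (Suc i)) w) = 0"
      if "coord (br (w ! i) (w ! Suc i)) e \<noteq> 0" for e
    proof -
      have len: "length (take i w @ e # drop (Suc (Suc i)) w) < size M" using il "1.prems" by simp
      then have "mset (take i w @ e # drop (Suc (Suc i)) w) \<noteq> M"
        by (metis less_irrefl size_mset)
      then show ?thesis using "1.IH"(2)[OF False i_def, of e] that len by (auto simp del: size_mset)
    qed
    have "(\<Sum>e\<in>csupp (br (w ! i) (w ! Suc i)).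
        coord (br (w ! i) (w ! Suc i)) e * pbw_coeff M (take i w @ e # drop (Suc (Suc i)) w)) = 0"
      by (rule sum.neutral) (simp add: shorter)
    then show ?thesis
      by (subst pbw_coeff.simps) (simp add: False swap flip: i_def)
  qed
qed

end

context pbw_basis
begin

lemma pbw_coeff_mid_add: "pbw_coeff_mid M u (x + y) v = pbw_coeff_mid M u x v + pbw_coeff_mid M u y v"
  and pbw_coeff_mid_zero: "pbw_coeff_mid M u 0 v = 0"
  and pbw_coeff_mid_minus: "pbw_coeff_mid M u (- x) v = - pbw_coeff_mid M u x v"
  and pbw_coeff_mid_diff: "pbw_coeff_mid M u (x - y) v = pbw_coeff_mid M u x v - pbw_coeff_mid M u y v"
  by (simp_all add: pbw_coeff_mid_def lin_ext_add lin_ext_zero lin_ext_minus lin_ext_diff)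

lemma pbw_coeff_mid_diff_words:
  "pbw_coeff_mid M u x v - pbw_coeff_mid M u' x v' =
     lin_ext (\<lambda>e. pbw_coeff M (u @ e # v) - pbw_coeff M (u' @ e # v')) x"
  by (simp add: pbw_coeff_mid_def lin_ext_linear_fun)

lemma pbw_coeff_mid_jacobi:
  "pbw_coeff_mid M u (br (br a b) c) v + pbw_coeff_mid M u (br (br c a) b) v
     - pbw_coeff_mid M u (br (br c b) a) v = 0"
  using jacobi_nested[of a b c] pbw_coeff_mid_zero[of M u v]
  by (simp add: pbw_coeff_mid_add[symmetric] pbw_coeff_mid_diff[symmetric])

definition swap_rule :: "'g multiset \<Rightarrow> 'g list \<Rightarrow> 'g \<Rightarrow> 'g \<Rightarrow> 'g list \<Rightarrow> bool" where
  "swap_rule M u a b v \<longleftrightarrow>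
     pbw_coeff M (u @ a # b # v) - pbw_coeff M (u @ b # a # v) = pbw_coeff_mid M u (br a b) v"

definition commutation_rule :: "'g multiset \<Rightarrow> nat \<Rightarrow> bool" where
  "commutation_rule M n \<longleftrightarrow> (\<forall>u a b v. length u + length v + 2 = n \<longrightarrow> swap_rule M u a b v)"

lemma commutation_ruleD:
  "commutation_rule M n \<Longrightarrow> length u + length v + 2 = n \<Longrightarrow>
     pbw_coeff M (u @ a # b # v) - pbw_coeff M (u @ b # a # v) = pbw_coeff_mid M u (br a b) v"
  unfolding commutation_rule_def swap_rule_def by blast

lemma pbw_coeff_mid_move_letter:
  assumes "commutation_rule M (length u + length v + 2)"
  shows "pbw_coeff_mid M u x (y # v) - pbw_coeff_mid M (u @ [y]) x v = pbw_coeff_mid M u (br x y) v"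
proof -
  have "pbw_coeff_mid M u x (y # v) - pbw_coeff_mid M (u @ [y]) x v
      = lin_ext (\<lambda>e. pbw_coeff M (u @ e # y # v) - pbw_coeff M (u @ y # e # v)) x"
    by (simp add: pbw_coeff_mid_diff_words)
  also have "\<dots> = lin_ext (\<lambda>e. pbw_coeff_mid M u (br e y) v) x"
    by (simp add: commutation_ruleD[OF assms])
  also have "\<dots> = pbw_coeff_mid M u (br x y) v"
    by (simp add: pbw_coeff_mid_def lin_ext_br_left[of _ x])
  finally show ?thesis .
qed

text \<open>The two ways of resolving a descent \<open>c a b\<close> with \<open>b < a < c\<close> agree by the Jacobi identity.\<close>

lemma commutation_overlap:
  assumes shorter: "commutation_rule M (length u + length v + 2)"
    and IH: "\<And>u' a' b' v'. length u' + length v' = Suc (length u + length v) \<Longrightarrow>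
      inv_count lt (u' @ a' # b' # v') < inv_count lt (u @ c # a # b # v) \<Longrightarrow> lt b' a' \<Longrightarrow>
      swap_rule M u' a' b' v'"
    and ba: "lt b a" and ac: "lt a c" and nd: "no_descent lt (u @ [c])"
  shows "swap_rule M (u @ [c]) a b v"
proof -
  let ?N = "pbw_coeff M" and ?L = "pbw_coeff_mid M"
  have bc: "lt b c" using lt_trans[OF ba ac] .
  have n0: "inv_count lt (u @ c # a # b # v) = Suc (inv_count lt (u @ a # c # b # v))"
    using inv_count_swap'[OF ac, of u "b # v"] by simp
  have n1: "inv_count lt (u @ a # c # b # v) = Suc (inv_count lt (u @ a # b # c # v))"
    using inv_count_swap'[OF bc, of "u @ [a]" v] by simp
  have n2: "inv_count lt (u @ c # a # b # v) = Suc (inv_count lt (u @ c # b # a # v))"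
    using inv_count_swap'[OF ba, of "u @ [c]" v] by simp
  have n3: "inv_count lt (u @ c # b # a # v) = Suc (inv_count lt (u @ b # c # a # v))"
    using inv_count_swap'[OF bc, of u "a # v"] by simp
  have "?N (u @ c # a # b # v) = ?N (u @ a # c # b # v) + ?L u (br c a) (b # v)"
    using pbw_coeff_first_descent[OF ac nd, of M "b # v"] by simp
  moreover have "?N (u @ a # c # b # v) - ?N (u @ a # b # c # v) = ?L (u @ [a]) (br c b) v"
    using IH[of "u @ [a]" v c b] n0 bc by (simp add: swap_rule_def)
  moreover have "?N (u @ a # b # c # v) - ?N (u @ b # a # c # v) = ?L u (br a b) (c # v)"
    using IH[of u "c # v" a b] n0 n1 ba by (simp add: swap_rule_def)
  moreover have "?N (u @ c # b # a # v) - ?N (u @ b # c # a # v) = ?L u (br c b) (a # v)"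
    using IH[of u "a # v" c b] n2 bc by (simp add: swap_rule_def)
  moreover have "?N (u @ b # c # a # v) - ?N (u @ b # a # c # v) = ?L (u @ [b]) (br c a) v"
    using IH[of "u @ [b]" v c a] n2 n3 ac by (simp add: swap_rule_def)
  moreover have "?L u (br a b) (c # v) - ?L (u @ [c]) (br a b) v = ?L u (br (br a b) c) v"
    and "?L u (br c a) (b # v) - ?L (u @ [b]) (br c a) v = ?L u (br (br c a) b) v"
    and "?L u (br c b) (a # v) - ?L (u @ [a]) (br c b) v = ?L u (br (br c b) a) v"
    by (rule pbw_coeff_mid_move_letter[OF shorter])+
  ultimately show ?thesis
    using pbw_coeff_mid_jacobi[of M u a b c v] by (simp add: swap_rule_def algebra_simps)
qed

text \<open>Resolving two disjoint descents in either order gives the same result.\<close>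

lemma commutation_disjoint:
  assumes shorter: "commutation_rule M (length u + length m + length v + 3)"
    and IH: "\<And>u' a' b' v'. length u' + length v' = length u + length m + length v + 2 \<Longrightarrow>
      inv_count lt (u' @ a' # b' # v') < inv_count lt (u @ c # d # m @ a # b # v) \<Longrightarrow> lt b' a' \<Longrightarrow>
      swap_rule M u' a' b' v'"
    and ba: "lt b a" and dc: "lt d c" and nd: "no_descent lt (u @ [c])"
  shows "swap_rule M (u @ c # d # m) a b v"
proof -
  let ?N = "pbw_coeff M" and ?L = "pbw_coeff_mid M"
  have n1: "inv_count lt (u @ c # d # m @ a # b # v) = Suc (inv_count lt (u @ d # c # m @ a # b # v))"
    using inv_count_swap'[OF dc, of u "m @ a # b # v"] by simp
  have n2: "inv_count lt (u @ c # d # m @ a # b # v) = Suc (inv_count lt (u @ c # d # m @ b # a # v))"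
    using inv_count_swap'[OF ba, of "u @ c # d # m" v] by simp
  have "?N (u @ c # d # m @ a # b # v) = ?N (u @ d # c # m @ a # b # v) + ?L u (br c d) (m @ a # b # v)"
    using pbw_coeff_first_descent[OF dc nd, of M "m @ a # b # v"] by simp
  moreover have "?N (u @ d # c # m @ a # b # v) - ?N (u @ d # c # m @ b # a # v) = ?L (u @ d # c # m) (br a b) v"
    using IH[of "u @ d # c # m" v a b] n1 ba by (simp add: swap_rule_def)
  moreover have "?N (u @ c # d # m @ b # a # v) - ?N (u @ d # c # m @ b # a # v) = ?L u (br c d) (m @ b # a # v)"
    using IH[of u "m @ b # a # v" c d] n2 dc by (simp add: swap_rule_def)
  moreover have "?L u (br c d) (m @ a # b # v) - ?L u (br c d) (m @ b # a # v)
      = lin_ext (\<lambda>e. ?L (u @ e # m) (br a b) v) (br c d)"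
    using commutation_ruleD[OF shorter, of "u @ _ # m" v] by (simp add: pbw_coeff_mid_diff_words)
  moreover have "?L (u @ c # d # m) (br a b) v - ?L (u @ d # c # m) (br a b) v
      = lin_ext (\<lambda>f. ?L u (br c d) (m @ f # v)) (br a b)"
    using commutation_ruleD[OF shorter, of u "m @ _ # v"] by (simp add: pbw_coeff_mid_diff_words)
  moreover have "lin_ext (\<lambda>e. ?L (u @ e # m) (br a b) v) (br c d)
      = lin_ext (\<lambda>f. ?L u (br c d) (m @ f # v)) (br a b)"
    using lin_ext_swap[of "\<lambda>e f. ?N (u @ e # m @ f # v)" "br a b" "br c d"]
    by (simp add: pbw_coeff_mid_def)
  ultimately show ?thesis by (simp add: swap_rule_def algebra_simps)
qed

lemma swap_rule_descent:
  assumes "length u + length v + 2 = n" "lt b a"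
    and shorter: "\<And>n'. n' < n \<Longrightarrow> commutation_rule M n'"
  shows "swap_rule M u a b v"
  using assms(1,2)
proof (induction "inv_count lt (u @ a # b # v)" arbitrary: u a b v rule: less_induct)
  case less
  have IH: "swap_rule M u' a' b' v'"
    if "length u' + length v' + 2 = n" "inv_count lt (u' @ a' # b' # v') < inv_count lt (u @ a # b # v)"
      "lt b' a'" for u' a' b' v'
    using less.hyps that by blast
  show ?case
  proof (cases "no_descent lt (u @ [a])")
    case True
    then show ?thesis
      using pbw_coeff_first_descent[OF less.prems(2) True, of M v] by (simp add: swap_rule_def)
  next
    case False
    then obtain u1 c d r where ua: "u @ [a] = u1 @ c # d # r" and dc: "lt d c"
      and nd: "no_descent lt (u1 @ [c])"
      by (rule not_no_descentE)
    show ?thesis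
    proof (cases r rule: rev_cases)
      case Nil
      then have u: "u = u1 @ [c]" and "d = a" using ua by auto
      then have ac: "lt a c" using dc by simp
      have "length u1 + length v + 2 < n" using less.prems(1) u by simp
      then show ?thesis unfolding u
        by (rule commutation_overlap[OF shorter _ less.prems(2) ac nd]) (use IH u less.prems(1) in auto)
    next
      case (snoc m z)
      then have u: "u = u1 @ c # d # m" using ua by auto
      have "length u1 + length m + length v + 3 < n" using less.prems(1) u by simp
      then show ?thesis unfolding u
        by (rule commutation_disjoint[OF shorter _ less.prems(2) dc nd]) (use IH u less.prems(1) in auto)
    qed
  qed
qed

lemma commutation_rule_all: "commutation_rule M n"
proof (induction n rule: less_induct)
  case (less n)
  show ?case unfolding commutation_rule_def
  proof (intro allI impI)
    fix u v :: "'g list" and a b :: 'g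
    assume len: "length u + length v + 2 = n"
    consider "a = b" | "lt b a" | "lt a b" using lt_total by blast
    then show "swap_rule M u a b v"
    proof cases
      case 1
      then show ?thesis by (simp add: swap_rule_def br_self pbw_coeff_mid_zero)
    next
      case 2
      then show ?thesis using swap_rule_descent[OF len _ less.IH] by blast
    next
      case 3
      then have "swap_rule M u b a v" using swap_rule_descent[OF len _ less.IH] by blast
      then show ?thesis by (simp add: swap_rule_def br_antisym[of b a] pbw_coeff_mid_minus algebra_simps)
    qed
  qed
qed

lemma pbw_coeff_swap:
  "pbw_coeff M (u @ a # b # v) - pbw_coeff M (u @ b # a # v) = pbw_coeff_mid M u (br a b) v"
  using commutation_ruleD[OF commutation_rule_all] by blast

end

section \<open>The PBW functionals vanish on the ideal\<close>

context pbw_basis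
begin

fun multilin :: "('g list \<Rightarrow> 'k) \<Rightarrow> 'g list \<Rightarrow> 'k" where
  "multilin F [] = F []"
| "multilin F (x # xs) = lin_ext (\<lambda>e. multilin (\<lambda>ys. F (e # ys)) xs) x"

lemma multilin_linear_fun:
  "multilin (\<lambda>w. F w + G w) xs = multilin F xs + multilin G xs"
  "multilin (\<lambda>w. F w - G w) xs = multilin F xs - multilin G xs"
  "multilin (\<lambda>w. c * F w) xs = c * multilin F xs"
  "multilin (\<lambda>w. \<Sum>i\<in>I. H i w) xs = (\<Sum>i\<in>I. multilin (H i) xs)"
  "multilin (\<lambda>w. 0) xs = 0"
  by (induction xs arbitrary: F G H) (simp_all add: lin_ext_linear_fun lin_ext_def)

lemma multilin_cong: "(\<And>w. length w = length xs \<Longrightarrow> F w = G w) \<Longrightarrow> multilin F xs = multilin G xs"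
proof (induction xs arbitrary: F G)
  case (Cons x xs)
  have "multilin (\<lambda>ys. F (e # ys)) xs = multilin (\<lambda>ys. G (e # ys)) xs" for e
    by (rule Cons.IH) (simp add: Cons.prems)
  then show ?case by simp
qed simp

lemma multilin_append: "multilin F (p @ s) = multilin (\<lambda>p'. multilin (\<lambda>s'. F (p' @ s')) s) p"
  by (induction p arbitrary: F) simp_all

lemma multilin_lin_ext: "multilin (\<lambda>s. lin_ext (\<lambda>g. H g s) z) q = lin_ext (\<lambda>g. multilin (H g) q) z"
proof (induction q arbitrary: H)
  case (Cons x q)
  then show ?case using lin_ext_swap[of "\<lambda>e g. multilin (\<lambda>ys. H g (e # ys)) q" z x] by simp
qed simp

lemma multilin_letter_add:
  "multilin F (p @ (x + y) # q) = multilin F (p @ x # q) + multilin F (p @ y # q)"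
  by (simp add: multilin_append lin_ext_add multilin_linear_fun)

lemma multilin_letter_scale: "multilin F (p @ sc c x # q) = c * multilin F (p @ x # q)"
  by (simp add: multilin_append lin_ext_scale multilin_linear_fun)

lemma multilin_swap_Cons:
  "multilin (\<lambda>s. pbw_coeff M (p @ s)) (x # y # q) - multilin (\<lambda>s. pbw_coeff M (p @ s)) (y # x # q)
     = multilin (\<lambda>s. pbw_coeff M (p @ s)) (br x y # q)"
proof -
  define Z where "Z e f = multilin (\<lambda>s. pbw_coeff M (p @ e # f # s)) q" for e f
  define W where "W = (\<lambda>g. multilin (\<lambda>s. pbw_coeff M (p @ g # s)) q)"
  have "Z e f - Z f e = lin_ext W (br e f)" for e f
  proof -
    have "Z e f - Z f e = multilin (\<lambda>s. pbw_coeff_mid M p (br e f) s) q"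
      by (simp add: Z_def pbw_coeff_swap multilin_linear_fun(2)[symmetric] del: multilin_linear_fun)
    then show ?thesis by (simp add: pbw_coeff_mid_def multilin_lin_ext W_def)
  qed
  then have "multilin (\<lambda>s. pbw_coeff M (p @ s)) (x # y # q)
      - multilin (\<lambda>s. pbw_coeff M (p @ s)) (y # x # q)
      = lin_ext (\<lambda>e. lin_ext (\<lambda>f. lin_ext W (br e f)) y) x"
    using lin_ext_swap[of "\<lambda>f e. Z f e" x y]
    by (simp add: Z_def lin_ext_linear_fun(2)[symmetric] del: lin_ext_linear_fun)
  also have "\<dots> = lin_ext W (br x y)"
    by (subst lin_ext_br_left) (simp add: lin_ext_br_right[where x = y])
  also have "\<dots> = multilin (\<lambda>s. pbw_coeff M (p @ s)) (br x y # q)"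
    by (simp add: W_def)
  finally show ?thesis .
qed

lemma multilin_swap:
  "multilin (pbw_coeff M) (p @ x # y # q) - multilin (pbw_coeff M) (p @ y # x # q)
     = multilin (pbw_coeff M) (p @ br x y # q)"
proof -
  have "multilin (pbw_coeff M) (p @ x # y # q) - multilin (pbw_coeff M) (p @ y # x # q)
      = multilin (\<lambda>p'. multilin (\<lambda>s. pbw_coeff M (p' @ s)) (x # y # q)
          - multilin (\<lambda>s. pbw_coeff M (p' @ s)) (y # x # q)) p"
    by (simp only: multilin_append multilin_linear_fun(2))
  also have "\<dots> = multilin (pbw_coeff M) (p @ br x y # q)"
    by (simp only: multilin_swap_Cons multilin_append)
  finally show ?thesis .
qed

definition pbw_functional :: "'g multiset \<Rightarrow> 'g list \<Rightarrow> 'k" where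
  "pbw_functional M = multilin (pbw_coeff M)"

lemma pbw_functional_ue_ideal:
  assumes "f \<in> ue_ideal sc br"
  shows "fpair (pbw_functional M) f = 0"
proof (rule fpair_ue_ideal[OF _ assms])
  fix p q r assume "r \<in> ue_rels sc br"
  then show "fpair (\<lambda>s. pbw_functional M (p @ s @ q)) r = 0"
    unfolding ue_rels_def
  proof (elim UnE CollectE exE conjE)
    fix x y assume "r = fsub (fsub (wd [x + y]) (wd [x])) (wd [y])"
    then show ?thesis by (simp add: fpair_diff pbw_functional_def multilin_letter_add)
  next
    fix c x assume "r = fsub (wd [sc c x]) (fscale c (wd [x]))"
    then show ?thesis by (simp add: fpair_diff fpair_scale pbw_functional_def multilin_letter_scale)
  next
    fix x y assume "r = fsub (fsub (wd [x, y]) (wd [y, x])) (wd [br x y])"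
    then show ?thesis using multilin_swap[of M p x y q] by (simp add: fpair_diff pbw_functional_def)
  qed
qed

end

lemma sum_permutations_prod_permute:
  assumes \<tau>: "\<tau> permutes {..<m}"
  shows "(\<Sum>\<sigma> | \<sigma> permutes {..<m}. \<Prod>i<m. f (\<sigma> i) (\<tau> i))
    = (\<Sum>\<sigma> | \<sigma> permutes {..<m}. \<Prod>i<m. f (\<sigma> i) i)"
proof -
  have "(\<Prod>i<m. f (\<sigma> i) (\<tau> i)) = (\<Prod>j<m. f ((\<sigma> \<circ> inv \<tau>) j) j)" for \<sigma>
    using prod.permute[OF \<tau>, of "\<lambda>j. f ((\<sigma> \<circ> inv \<tau>) j) j"] permutes_inverses(2)[OF \<tau>]
    by (simp add: comp_def)
  then show ?thesis
    using sum_permutations_compose_right[OF permutes_inv[OF \<tau>], of "\<lambda>\<sigma>. \<Prod>j<m. f (\<sigma> j) j"] by simp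
qed

lemma finite_lists_with_mset: "finite {t. mset t = M}"
proof -
  have "{t. mset t = M} \<subseteq> {t. set t \<subseteq> set_mset M \<and> length t = size M}" by auto
  then show ?thesis by (rule finite_subset) (rule finite_lists_length_eq, simp)
qed

context pbw_basis
begin

text \<open>\<open>basis_coeff w t\<close> is the coefficient of the basis word \<open>t\<close> in the word \<open>w\<close>, after expanding
  every letter of \<open>w\<close> in the basis; \<open>expand_coeff f t\<close> is the same for a linear combination \<open>f\<close>.\<close>

definition basis_coeff :: "'g list \<Rightarrow> 'g list \<Rightarrow> 'k" where
  "basis_coeff w t = multilin (\<lambda>w'. if w' = t then 1 else 0) w"

definition expand_coeff :: "('g list \<Rightarrow> 'k) \<Rightarrow> 'g list \<Rightarrow> 'k" where
  "expand_coeff f t = fpair (\<lambda>w. basis_coeff w t) f"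

lemma basis_coeff_eq_prod:
  "basis_coeff w t = (if length w = length t then (\<Prod>i<length w. coord (w ! i) (t ! i)) else 0)"
proof (induction w arbitrary: t)
  case Nil
  then show ?case by (cases t) (simp_all add: basis_coeff_def)
next
  case (Cons x xs)
  show ?case
  proof (cases t)
    case Nil
    have "(\<lambda>ys. if x' # ys = t then 1 else (0::'k)) = (\<lambda>ys. 0)" for x' using Nil by auto
    then show ?thesis using Nil by (simp add: basis_coeff_def multilin_linear_fun lin_ext_def)
  next
    case (Cons t0 t')
    have fn: "(\<lambda>ys. if e # ys = t then 1 else (0::'k))
        = (\<lambda>ys. (if e = t0 then 1 else 0) * (if ys = t' then 1 else 0))" for e
      using Cons by auto
    have "basis_coeff (x # xs) t
        = (\<Sum>e\<in>csupp x. coord x e * ((if e = t0 then 1 else 0) * basis_coeff xs t'))"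
      by (simp add: basis_coeff_def fn multilin_linear_fun lin_ext_def)
    also have "\<dots> = (\<Sum>e\<in>csupp x. if e = t0 then coord x e * basis_coeff xs t' else 0)"
      by (rule sum.cong) auto
    also have "\<dots> = coord x t0 * basis_coeff xs t'" by (simp add: sum.delta')
    also have "\<dots> = (if length (x # xs) = length t
        then (\<Prod>i<length (x # xs). coord ((x # xs) ! i) (t ! i)) else 0)"
      using Cons.IH[of t'] Cons by (simp del: prod.lessThan_Suc add: prod.lessThan_Suc_shift)
    finally show ?thesis .
  qed
qed

lemma basis_coeff_length: "length w \<noteq> length t \<Longrightarrow> basis_coeff w t = 0"
  by (simp add: basis_coeff_eq_prod)

lemma pbw_functional_top:
  assumes l: "length w = size M"
  shows "pbw_functional M w = (\<Sum>t\<in>{t. mset t = M}. basis_coeff w t)"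
proof -
  have "pbw_functional M w = multilin (\<lambda>w'. if mset w' = M then 1 else 0) w"
    unfolding pbw_functional_def by (rule multilin_cong) (simp add: pbw_coeff_top l)
  also have "\<dots> = multilin (\<lambda>w'. \<Sum>t\<in>{t. mset t = M}. if w' = t then 1 else 0) w"
    by (rule arg_cong[where f="\<lambda>F. multilin F w"]) (auto simp: finite_lists_with_mset sum.delta')
  also have "\<dots> = (\<Sum>t\<in>{t. mset t = M}. basis_coeff w t)"
    by (simp add: multilin_linear_fun basis_coeff_def)
  finally show ?thesis .
qed

lemma pbw_functional_short:
  assumes l: "length w < size M"
  shows "pbw_functional M w = 0"
proof -
  have "pbw_functional M w = multilin (\<lambda>w'. 0) w"
    unfolding pbw_functional_def by (rule multilin_cong) (use l in \<open>auto simp: pbw_coeff_top\<close>)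
  then show ?thesis by (simp add: multilin_linear_fun)
qed

lemma fpair_pbw_functional_top:
  assumes f: "f \<in> homog m" and M: "size M = m"
  shows "fpair (pbw_functional M) f = (\<Sum>t\<in>{t. mset t = M}. expand_coeff f t)"
proof -
  have "fpair (pbw_functional M) f = fpair (\<lambda>w. \<Sum>t\<in>{t. mset t = M}. basis_coeff w t) f"
    by (rule fpair_cong) (use f M in \<open>auto simp: homog_def pbw_functional_top\<close>)
  then show ?thesis by (simp add: fpair_linear_left expand_coeff_def)
qed

lemma fpair_pbw_functional_short:
  assumes f: "f \<in> homog m" and M: "m < size M"
  shows "fpair (pbw_functional M) f = 0"
proof -
  have "fpair (pbw_functional M) f = fpair (\<lambda>w. 0) f"
    by (rule fpair_cong) (use f M in \<open>auto simp: homog_def pbw_functional_short\<close>)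
  then show ?thesis by (simp add: fpair_def)
qed

lemma expand_coeff_symz_permute:
  assumes \<tau>: "\<tau> permutes {..<length t}"
  shows "expand_coeff (symz xs) (permute_list \<tau> t) = expand_coeff (symz xs) t"
proof -
  let ?m = "length xs"
  let ?P = "{\<sigma>. \<sigma> permutes {..<?m}}"
  have E: "expand_coeff (symz xs) t'
      = 1 / fact ?m * (\<Sum>\<sigma>\<in>?P. basis_coeff (map (\<lambda>i. xs ! \<sigma> i) [0..<?m]) t')" for t'
    unfolding expand_coeff_def symz_def by (simp add: fpair_scale fpair_fsum finite_permutations)
  show ?thesis
  proof (cases "?m = length t")
    case True
    then show ?thesis
      using sum_permutations_prod_permute[of \<tau> ?m "\<lambda>a b. coord (xs ! a) (t ! b)"] \<tau>
      by (simp add: E basis_coeff_eq_prod permute_list_nth)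
  qed (simp add: E basis_coeff_length)
qed

lemma expand_coeff_fspan:
  "finite A \<Longrightarrow> (\<And>g. g \<in> A \<Longrightarrow> g \<in> fin_supp) \<Longrightarrow>
     expand_coeff (fsum (\<lambda>g. fscale (c g) g) A) t = (\<Sum>g\<in>A. c g * expand_coeff g t)"
  unfolding expand_coeff_def by (simp add: fpair_fsum fpair_scale)

lemma expand_coeff_sym_permute:
  assumes s: "s \<in> sym_sub m" and \<tau>: "\<tau> permutes {..<length t}"
  shows "expand_coeff s (permute_list \<tau> t) = expand_coeff s t"
proof -
  obtain A c where A: "finite A" "A \<subseteq> {symz xs |xs. length xs = m}" "s = fsum (\<lambda>g. fscale (c g) g) A"
    using s unfolding sym_sub_def fspan_def by blast
  have fin: "g \<in> A \<Longrightarrow> g \<in> fin_supp" for g using A(2) fin_supp_symz by blast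
  have "expand_coeff g (permute_list \<tau> t) = expand_coeff g t" if "g \<in> A" for g
    using that A(2) expand_coeff_symz_permute[OF \<tau>] by blast
  then show ?thesis unfolding A(3) by (simp add: expand_coeff_fspan[OF A(1) fin])
qed

lemma expand_coeff_eq_0:
  assumes s: "s \<in> sym_sub m" and Z: "\<And>M. size M = m \<Longrightarrow> fpair (pbw_functional M) s = 0"
  shows "expand_coeff s t = 0"
proof (cases "length t = m")
  case False
  have sH: "s \<in> homog m" using s sym_sub_homog by blast
  have "expand_coeff s t = fpair (\<lambda>w. 0) s"
    unfolding expand_coeff_def
    by (rule fpair_cong) (use sH False in \<open>auto simp: homog_def basis_coeff_length\<close>)
  then show ?thesis by (simp add: fpair_def)
next
  case True
  let ?M = "mset t"
  let ?P = "{t'. mset t' = ?M}"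
  have sH: "s \<in> homog m" using s sym_sub_homog by blast
  have eq: "expand_coeff s t' = expand_coeff s t" if "t' \<in> ?P" for t'
  proof -
    from that have "mset t' = mset t" by simp
    then obtain \<tau> where "\<tau> permutes {..<length t}" "permute_list \<tau> t = t'" by (rule mset_eq_permutation)
    then show ?thesis using expand_coeff_sym_permute[OF s] by metis
  qed
  have "0 = fpair (pbw_functional ?M) s" using Z True by simp
  also have "\<dots> = (\<Sum>t'\<in>?P. expand_coeff s t')"
    by (rule fpair_pbw_functional_top[OF sH]) (simp add: True)
  also have "\<dots> = (\<Sum>t'\<in>?P. expand_coeff s t)" by (rule sum.cong[OF refl]) (rule eq)
  also have "\<dots> = of_nat (card ?P) * expand_coeff s t" by simp
  finally have "of_nat (card ?P) * expand_coeff s t = 0" by simp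
  moreover have "card ?P \<noteq> 0" using finite_lists_with_mset[of ?M] by (auto simp: card_eq_0_iff)
  ultimately show ?thesis by simp
qed

lemma ue_ideal_letter_sum:
  "finite A \<Longrightarrow> fsub (wd (p @ (\<Sum>e\<in>A. sc (c e) e) # q)) (fsum (\<lambda>e. fscale (c e) (wd (p @ e # q))) A)
     \<in> ue_ideal sc br"
proof (induction A rule: finite_induct)
  case empty
  have T: "fsub (fsub (wd (p @ [0 + 0] @ q)) (wd (p @ [0] @ q))) (wd (p @ [0] @ q)) \<in> ue_ideal sc br"
    by (rule ue_ideal_add_letter)
  have "fsub (wd (p @ (\<Sum>e\<in>{}. sc (c e) e) # q)) (fsum (\<lambda>e. fscale (c e) (wd (p @ e # q))) {})
      = fscale (-1) (fsub (fsub (wd (p @ [0 + 0] @ q)) (wd (p @ [0] @ q))) (wd (p @ [0] @ q)))"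
    by (rule ext) (simp add: fops_apply)
  then show ?case using fsubspace_scale[OF ue_ideal_subspace T] by simp
next
  case (insert a A)
  let ?S = "\<Sum>e\<in>A. sc (c e) e"
  have T1: "fsub (fsub (wd (p @ [sc (c a) a + ?S] @ q)) (wd (p @ [sc (c a) a] @ q))) (wd (p @ [?S] @ q))
      \<in> ue_ideal sc br"
    by (rule ue_ideal_add_letter)
  have T2: "fsub (wd (p @ [sc (c a) a] @ q)) (fscale (c a) (wd (p @ [a] @ q))) \<in> ue_ideal sc br"
    by (rule ue_ideal_scale_letter)
  have T3: "fsub (wd (p @ ?S # q)) (fsum (\<lambda>e. fscale (c e) (wd (p @ e # q))) A) \<in> ue_ideal sc br"
    by (rule insert.IH)
  have "fsub (wd (p @ (\<Sum>e\<in>insert a A. sc (c e) e) # q))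
        (fsum (\<lambda>e. fscale (c e) (wd (p @ e # q))) (insert a A))
      = fadd (fadd (fsub (fsub (wd (p @ [sc (c a) a + ?S] @ q)) (wd (p @ [sc (c a) a] @ q))) (wd (p @ [?S] @ q)))
          (fsub (wd (p @ [sc (c a) a] @ q)) (fscale (c a) (wd (p @ [a] @ q)))))
        (fsub (wd (p @ ?S # q)) (fsum (\<lambda>e. fscale (c e) (wd (p @ e # q))) A))"
    by (rule ext) (simp add: fops_apply insert.hyps algebra_simps)
  then show ?case
    using fsubspace_add[OF ue_ideal_subspace fsubspace_add[OF ue_ideal_subspace T1 T2] T3] by simp
qed

lemma ue_ideal_letter_coord:
  "fsub (wd (p @ x # q)) (fsum (\<lambda>e. fscale (coord x e) (wd (p @ e # q))) (csupp x)) \<in> ue_ideal sc br"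
  using ue_ideal_letter_sum[of "csupp x" p "coord x" q] by (simp add: sum_coord_scale)

lemma ue_ideal_word_expand:
  "fsub (wd (p @ u)) (\<lambda>t. multilin (\<lambda>t'. if p @ t' = t then 1 else 0) u) \<in> ue_ideal sc br"
proof (induction u arbitrary: p)
  case Nil
  have "fsub (wd (p @ [])) (\<lambda>t. multilin (\<lambda>t'. if p @ t' = t then 1 else 0) []) = (\<lambda>_. 0)"
    by (rule ext) (auto simp: fops_apply wd_def)
  then show ?case using fsubspace_zero[OF ue_ideal_subspace] by simp
next
  case (Cons x u)
  define G where "G e = (\<lambda>t. multilin (\<lambda>t'. if (p @ [e]) @ t' = t then 1 else 0) u)" for e
  have IH: "fsub (wd (p @ e # u)) (G e) \<in> ue_ideal sc br" for e
    using Cons.IH[of "p @ [e]"] unfolding G_def by simp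
  have A: "fsum (\<lambda>e. fscale (coord x e) (fsub (wd (p @ e # u)) (G e))) (csupp x) \<in> ue_ideal sc br"
    by (rule fsubspace_fsum[OF ue_ideal_subspace]) (simp_all add: fsubspace_scale[OF ue_ideal_subspace IH])
  have "fsub (wd (p @ x # u)) (\<lambda>t. multilin (\<lambda>t'. if p @ t' = t then 1 else 0) (x # u))
      = fadd (fsub (wd (p @ x # u)) (fsum (\<lambda>e. fscale (coord x e) (wd (p @ e # u))) (csupp x)))
             (fsum (\<lambda>e. fscale (coord x e) (fsub (wd (p @ e # u)) (G e))) (csupp x))"
    by (rule ext) (simp add: fops_apply G_def lin_ext_def algebra_simps sum_subtractf sum.distrib)
  then show ?case using fsubspace_add[OF ue_ideal_subspace ue_ideal_letter_coord A] by simp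
qed

lemma ue_idealI_expand_coeff:
  assumes sf: "s \<in> fin_supp" and Z: "\<And>t. expand_coeff s t = 0"
  shows "s \<in> ue_ideal sc br"
proof -
  let ?S = "{w. s w \<noteq> 0}"
  define Exf where "Exf w = (\<lambda>t. multilin (\<lambda>t'. if t' = t then 1 else 0) w)" for w
  have E0: "fsub (wd w) (Exf w) \<in> ue_ideal sc br" for w
    using ue_ideal_word_expand[of "[]" w] by (simp add: Exf_def)
  have D: "fsum (\<lambda>w. fscale (s w) (fsub (wd w) (Exf w))) ?S \<in> ue_ideal sc br"
    by (rule fsubspace_fsum[OF ue_ideal_subspace]) (simp add: fsubspace_scale[OF ue_ideal_subspace E0])
  have "s = fsum (\<lambda>w. fscale (s w) (fsub (wd w) (Exf w))) ?S"
  proof (rule ext)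
    fix t
    have e1: "s t = (\<Sum>w\<in>?S. s w * wd w t)"
    proof -
      have "s t = fsum (\<lambda>v. fscale (s v) (wd v)) ?S t"
        by (rule fun_cong[OF fin_supp_eq_fsum_wd[OF sf]])
      then show ?thesis by (simp only: fops_apply)
    qed
    have e2: "(\<Sum>w\<in>?S. s w * Exf w t) = expand_coeff s t"
      by (simp add: expand_coeff_def fpair_def basis_coeff_def Exf_def)
    show "s t = fsum (\<lambda>w. fscale (s w) (fsub (wd w) (Exf w))) ?S t"
      using e1 e2 Z[of t] by (simp add: fops_apply right_diff_distrib sum_subtractf)
  qed
  then show ?thesis using D by simp
qed

text \<open>This is the direct-sum half of PBW in the form needed here. Pairing with \<open>pbw_functional M\<close>,
  \<open>size M\<close> the top degree, kills the ideal and all lower components, and on the top component it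
  sums the expansion coefficients over the arrangements of \<open>M\<close>; these coefficients agree by symmetry,
  so they all vanish (here the characteristic is used).\<close>

lemma sym_components_in_ue_ideal:
  "(\<forall>m\<le>n. f m \<in> sym_sub m) \<Longrightarrow> fsum f {..n} \<in> ue_ideal sc br \<Longrightarrow> (\<forall>m\<le>n. f m \<in> ue_ideal sc br)"
proof (induction n)
  case 0
  have "fsum f {..0} = f 0" by (rule ext) (simp add: fops_apply)
  then show ?case using 0 by simp
next
  case (Suc n)
  have fH: "f m \<in> homog m" if "m \<le> Suc n" for m using Suc.prems(1) that sym_sub_homog by blast
  have ff: "f m \<in> fin_supp" if "m \<le> Suc n" for m using fH[OF that] by (simp add: homog_def)
  have Z: "fpair (pbw_functional M) (f (Suc n)) = 0" if M: "size M = Suc n" for M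
  proof -
    have "0 = fpair (pbw_functional M) (fsum f {..Suc n})"
      using pbw_functional_ue_ideal[OF Suc.prems(2)] by simp
    also have "\<dots> = (\<Sum>m\<le>Suc n. fpair (pbw_functional M) (f m))"
      by (rule fpair_fsum) (simp_all add: ff)
    also have "\<dots> = fpair (pbw_functional M) (f (Suc n)) + (\<Sum>m\<le>n. fpair (pbw_functional M) (f m))"
      by simp
    also have "(\<Sum>m\<le>n. fpair (pbw_functional M) (f m)) = 0"
    proof (rule sum.neutral, rule ballI)
      fix m assume m: "m \<in> {..n}"
      show "fpair (pbw_functional M) (f m) = 0"
        using fpair_pbw_functional_short[OF fH[of m]] M m by simp
    qed
    finally show ?thesis by simp
  qed
  have top: "f (Suc n) \<in> ue_ideal sc br"
    using ff[of "Suc n"] expand_coeff_eq_0[OF Suc.prems(1)[rule_format, OF order_refl] Z]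
    by (auto intro: ue_idealI_expand_coeff)
  have "fsum f {..n} = fsub (fsum f {..Suc n}) (f (Suc n))" by (rule ext) (simp add: fops_apply)
  then have "fsum f {..n} \<in> ue_ideal sc br"
    using fsubspace_diff[OF ue_ideal_subspace Suc.prems(2) top] by simp
  then have "\<forall>m\<le>n. f m \<in> ue_ideal sc br" using Suc.IH Suc.prems(1) by simp
  then show ?case using top le_Suc_eq by auto
qed

end

section \<open>Symmetric elements span \<open>U(g)\<close>\<close>

definition ideal_plus_shorter ::
    "('k::field \<Rightarrow> 'g \<Rightarrow> 'g::ab_group_add) \<Rightarrow> ('g \<Rightarrow> 'g \<Rightarrow> 'g) \<Rightarrow> nat \<Rightarrow> ('g list \<Rightarrow> 'k) set" where
  "ideal_plus_shorter sc br n = set_plus_f (ue_ideal sc br) (fspan {wd z | z. length z < n})"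

context
  fixes sc :: "'k::field_char_0 \<Rightarrow> 'g::ab_group_add \<Rightarrow> 'g" and br :: "'g \<Rightarrow> 'g \<Rightarrow> 'g"
begin

lemma ideal_plus_shorter_subspace: "fsubspace (ideal_plus_shorter sc br n)"
  unfolding ideal_plus_shorter_def
  by (rule set_plus_f_subspace[OF ue_ideal_subspace fspan_subspace])

lemma wd_swap_mod_shorter:
  assumes "length p + length q + 2 = n"
  shows "fsub (wd (p @ a # b # q)) (wd (p @ b # a # q)) \<in> ideal_plus_shorter sc br n"
proof -
  have "fsub (wd (p @ a # b # q)) (wd (p @ b # a # q) :: 'g list \<Rightarrow> 'k)
      = fadd (fsub (fsub (wd (p @ [a, b] @ q)) (wd (p @ [b, a] @ q))) (wd (p @ [br a b] @ q)))
          (wd (p @ [br a b] @ q))"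
    by (rule ext) (simp add: fops_apply)
  moreover have "(wd (p @ [br a b] @ q) :: 'g list \<Rightarrow> 'k) \<in> fspan {wd z | z. length z < n}"
    by (rule fspan_superset) (use assms in auto)
  ultimately show ?thesis
    using ue_ideal_commutator_letters unfolding ideal_plus_shorter_def set_plus_f_def by blast
qed

lemma wd_move_mod_shorter:
  "length p + length s + length t + 1 = n \<Longrightarrow>
     fsub (wd (p @ s @ a # t)) (wd (p @ a # s @ t)) \<in> ideal_plus_shorter sc br n"
proof (induction s arbitrary: p)
  case Nil
  have "fsub (wd (p @ [] @ a # t)) (wd (p @ a # [] @ t) :: 'g list \<Rightarrow> 'k) = (\<lambda>_. 0)"
    by (rule ext) (simp add: fops_apply)
  then show ?case using fsubspace_zero[OF ideal_plus_shorter_subspace] by simp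
next
  case (Cons b s)
  have "fsub (wd (p @ (b # s) @ a # t)) (wd (p @ a # (b # s) @ t) :: 'g list \<Rightarrow> 'k)
      = fadd (fsub (wd ((p @ [b]) @ s @ a # t)) (wd ((p @ [b]) @ a # s @ t)))
          (fsub (wd (p @ b # a # (s @ t))) (wd (p @ a # b # (s @ t))))"
    by (rule ext) (simp add: fops_apply)
  moreover have "fsub (wd ((p @ [b]) @ s @ a # t)) (wd ((p @ [b]) @ a # s @ t))
      \<in> ideal_plus_shorter sc br n"
    by (rule Cons.IH) (use Cons.prems in simp)
  moreover have "fsub (wd (p @ b # a # (s @ t))) (wd (p @ a # b # (s @ t)))
      \<in> ideal_plus_shorter sc br n"
    by (rule wd_swap_mod_shorter) (use Cons.prems in simp)
  ultimately show ?case using fsubspace_add[OF ideal_plus_shorter_subspace] by simp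
qed

lemma wd_perm_mod_shorter:
  "mset y = mset y' \<Longrightarrow> length p + length y = n \<Longrightarrow>
     fsub (wd (p @ y)) (wd (p @ y')) \<in> ideal_plus_shorter sc br n"
proof (induction y' arbitrary: p y)
  case Nil
  then have "fsub (wd (p @ y)) (wd (p @ []) :: 'g list \<Rightarrow> 'k) = (\<lambda>_. 0)"
    by (intro ext) (simp add: fops_apply)
  then show ?case using fsubspace_zero[OF ideal_plus_shorter_subspace] by simp
next
  case (Cons a y'')
  have "a \<in> set y" using Cons.prems(1) by (metis list.set_intros(1) set_mset_mset)
  then obtain s t where y: "y = s @ a # t" by (meson split_list)
  have "fsub (wd (p @ y)) (wd (p @ a # y'') :: 'g list \<Rightarrow> 'k)
      = fadd (fsub (wd (p @ s @ a # t)) (wd (p @ a # s @ t)))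
          (fsub (wd ((p @ [a]) @ s @ t)) (wd ((p @ [a]) @ y'')))"
    by (rule ext) (simp add: fops_apply y)
  moreover have "fsub (wd (p @ s @ a # t)) (wd (p @ a # s @ t)) \<in> ideal_plus_shorter sc br n"
    by (rule wd_move_mod_shorter) (use Cons.prems y in simp)
  moreover have "fsub (wd ((p @ [a]) @ s @ t)) (wd ((p @ [a]) @ y'')) \<in> ideal_plus_shorter sc br n"
    by (rule Cons.IH) (use Cons.prems y in simp_all)
  ultimately show ?case using fsubspace_add[OF ideal_plus_shorter_subspace] by simp
qed

lemma wd_symz_mod_shorter:
  assumes n: "length y = n"
  shows "fsub (wd y) (symz y) \<in> ideal_plus_shorter sc br n"
proof -
  let ?P = "{\<sigma>. \<sigma> permutes {..<length y}}"
  have "card ?P = fact (length y)" by (rule card_permutations) simp_all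
  then have "fsub (wd y) (symz y)
      = fscale (1 / fact (length y))
          (fsum (\<lambda>\<sigma>. fsub (wd y) (wd (map (\<lambda>i. y ! \<sigma> i) [0..<length y]))) ?P)"
    by (intro ext) (simp add: fops_apply symz_def sum_subtractf field_simps)
  moreover have "fsub (wd y) (wd (map (\<lambda>i. y ! \<sigma> i) [0..<length y])) \<in> ideal_plus_shorter sc br n"
    if "\<sigma> \<in> ?P" for \<sigma>
    using wd_perm_mod_shorter[of y "map (\<lambda>i. y ! \<sigma> i) [0..<length y]" "[]" n]
      mset_permute_list[of \<sigma> y] that n
    by (simp add: permute_list_def)
  ultimately show ?thesis
    by (metis (no_types, lifting) fsubspace_fsum fsubspace_scale ideal_plus_shorter_subspace
        mem_Collect_eq)
qed

end

definition sym_sums :: "('g list \<Rightarrow> 'k::field_char_0) set \<Rightarrow> nat \<Rightarrow> ('g list \<Rightarrow> 'k) set" where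
  "sym_sums V n = {fsum h {..n} | h. \<forall>k\<le>n. h k \<in> sym_sub k \<inter> V}"

definition sym_mod_ideal ::
    "('k::field_char_0 \<Rightarrow> 'g \<Rightarrow> 'g::ab_group_add) \<Rightarrow> ('g \<Rightarrow> 'g \<Rightarrow> 'g) \<Rightarrow>
      ('g list \<Rightarrow> 'k) set \<Rightarrow> ('g list \<Rightarrow> 'k) set" where
  "sym_mod_ideal sc br V = set_plus_f (ue_ideal sc br) (\<Union>n. sym_sums V n)"

lemma sym_sums_subspace:
  assumes V: "fsubspace V"
  shows "fsubspace (sym_sums V n)"
  unfolding fsubspace_def
proof (intro conjI ballI allI)
  have "(\<lambda>_. 0) = fsum (\<lambda>_ _. 0) {..n}" by (rule ext) (simp add: fops_apply)
  then show "(\<lambda>_. 0) \<in> sym_sums V n"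
    unfolding sym_sums_def using fsubspace_zero[OF sym_sub_subspace] fsubspace_zero[OF V] by blast
next
  fix f g assume "f \<in> sym_sums V n" "g \<in> sym_sums V n"
  then obtain h1 h2 where h: "\<forall>k\<le>n. h1 k \<in> sym_sub k \<inter> V" "\<forall>k\<le>n. h2 k \<in> sym_sub k \<inter> V"
    and fg: "f = fsum h1 {..n}" "g = fsum h2 {..n}"
    unfolding sym_sums_def by blast
  have "fadd f g = fsum (\<lambda>k. fadd (h1 k) (h2 k)) {..n}"
    by (rule ext) (simp add: fg fops_apply sum.distrib)
  moreover have "\<forall>k\<le>n. fadd (h1 k) (h2 k) \<in> sym_sub k \<inter> V"
    using h fsubspace_add[OF sym_sub_subspace] fsubspace_add[OF V] by blast
  ultimately show "fadd f g \<in> sym_sums V n" unfolding sym_sums_def by blast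
next
  fix c f assume "f \<in> sym_sums V n"
  then obtain h where h: "\<forall>k\<le>n. h k \<in> sym_sub k \<inter> V" and f: "f = fsum h {..n}"
    unfolding sym_sums_def by blast
  have "fscale c f = fsum (\<lambda>k. fscale c (h k)) {..n}"
    by (rule ext) (simp add: f fops_apply sum_distrib_left)
  moreover have "\<forall>k\<le>n. fscale c (h k) \<in> sym_sub k \<inter> V"
    using h fsubspace_scale[OF sym_sub_subspace] fsubspace_scale[OF V] by blast
  ultimately show "fscale c f \<in> sym_sums V n" unfolding sym_sums_def by blast
qed

lemma sym_sums_mono:
  assumes V: "fsubspace V" and "m \<le> n"
  shows "sym_sums V m \<subseteq> sym_sums V n"
proof
  fix f assume "f \<in> sym_sums V m"
  then obtain h where h: "\<forall>k\<le>m. h k \<in> sym_sub k \<inter> V" and f: "f = fsum h {..m}"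
    unfolding sym_sums_def by blast
  define h' where "h' k = (if k \<le> m then h k else (\<lambda>_. 0))" for k
  have "f = fsum h' {..n}"
  proof (rule ext)
    fix w
    have "(\<Sum>k\<le>n. h' k w) = (\<Sum>k\<le>m. h' k w)"
      by (rule sum.mono_neutral_right) (use \<open>m \<le> n\<close> in \<open>auto simp: h'_def\<close>)
    then show "f w = fsum h' {..n} w" by (simp add: f fops_apply h'_def)
  qed
  moreover have "\<forall>k\<le>n. h' k \<in> sym_sub k \<inter> V"
    using h fsubspace_zero[OF sym_sub_subspace] fsubspace_zero[OF V] by (auto simp: h'_def)
  ultimately show "f \<in> sym_sums V n" unfolding sym_sums_def by blast
qed

lemma UN_sym_sums_subspace:
  assumes V: "fsubspace V"
  shows "fsubspace (\<Union>n. sym_sums V n)"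
  unfolding fsubspace_def
proof (intro conjI ballI allI)
  show "(\<lambda>_. 0) \<in> (\<Union>n. sym_sums V n)" using fsubspace_zero[OF sym_sums_subspace[OF V]] by blast
next
  fix f g assume "f \<in> (\<Union>n. sym_sums V n)" "g \<in> (\<Union>n. sym_sums V n)"
  then obtain m n where "f \<in> sym_sums V m" "g \<in> sym_sums V n" by blast
  then have "f \<in> sym_sums V (max m n)" "g \<in> sym_sums V (max m n)"
    using sym_sums_mono[OF V, of m "max m n"] sym_sums_mono[OF V, of n "max m n"] by auto
  then show "fadd f g \<in> (\<Union>n. sym_sums V n)" using fsubspace_add[OF sym_sums_subspace[OF V]] by blast
next
  fix c f assume "f \<in> (\<Union>n. sym_sums V n)"
  then show "fscale c f \<in> (\<Union>n. sym_sums V n)"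
    using fsubspace_scale[OF sym_sums_subspace[OF V]] by blast
qed

lemma sym_mod_ideal_subspace: "fsubspace V \<Longrightarrow> fsubspace (sym_mod_ideal sc br V)"
  unfolding sym_mod_ideal_def
  by (rule set_plus_f_subspace[OF ue_ideal_subspace UN_sym_sums_subspace])

lemma ue_ideal_subset_sym_mod_ideal:
  "fsubspace V \<Longrightarrow> f \<in> ue_ideal sc br \<Longrightarrow> f \<in> sym_mod_ideal sc br V"
  unfolding sym_mod_ideal_def by (rule set_plus_f_left[OF UN_sym_sums_subspace])

lemma sym_sub_subset_sym_mod_ideal:
  assumes V: "fsubspace V" and f: "f \<in> sym_sub m" "f \<in> V"
  shows "f \<in> sym_mod_ideal sc br V"
proof -
  define h where "h k = (if k = m then f else (\<lambda>_. 0))" for k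
  have "f = fsum h {..m}"
  proof (rule ext)
    fix w
    have "(\<Sum>k\<le>m. h k w) = (\<Sum>k\<in>{m}. h k w)" by (rule sum.mono_neutral_right) (auto simp: h_def)
    then show "f w = fsum h {..m} w" by (simp add: fops_apply h_def)
  qed
  moreover have "\<forall>k\<le>m. h k \<in> sym_sub k \<inter> V"
    using f fsubspace_zero[OF sym_sub_subspace] fsubspace_zero[OF V] by (auto simp: h_def)
  ultimately have "f \<in> (\<Union>n. sym_sums V n)" unfolding sym_sums_def by blast
  then show ?thesis
    unfolding sym_mod_ideal_def by (rule set_plus_f_right[OF ue_ideal_subspace])
qed

lemma sym_mod_idealE:
  assumes "f \<in> sym_mod_ideal sc br V"
  obtains N h where "\<forall>k\<le>N. h k \<in> sym_sub k \<inter> V" "fsub f (fsum h {..N}) \<in> ue_ideal sc br"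
proof -
  obtain i s n where "i \<in> ue_ideal sc br" "s \<in> sym_sums V n" "f = fadd i s"
    using assms unfolding sym_mod_ideal_def by (blast elim: set_plus_fE)
  moreover from this obtain h where "\<forall>k\<le>n. h k \<in> sym_sub k \<inter> V" "s = fsum h {..n}"
    unfolding sym_sums_def by blast
  moreover have "fsub (fadd i s) s = i" by (rule ext) (simp add: fops_apply)
  ultimately show ?thesis using that by metis
qed

lemma wd_in_sym_mod_ideal:
  "(wd y :: 'g::ab_group_add list \<Rightarrow> 'k::field_char_0) \<in> sym_mod_ideal sc br UNIV"
proof (induction "length y" arbitrary: y rule: less_induct)
  case less
  have "fsub (wd y) (symz y) \<in> ideal_plus_shorter sc br (length y)"
    by (rule wd_symz_mod_shorter) simp
  then obtain i l where il: "i \<in> ue_ideal sc br" "l \<in> fspan {wd z | z. length z < length y}"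
    "fsub (wd y) (symz y) = fadd i l"
    unfolding ideal_plus_shorter_def by (blast elim: set_plus_fE)
  have "fspan {wd z | z. length z < length y} \<subseteq> sym_mod_ideal sc br UNIV"
    by (rule fspan_minimal[OF sym_mod_ideal_subspace[OF fsubspace_UNIV]]) (use less in blast)
  then have "l \<in> sym_mod_ideal sc br UNIV" using il(2) by blast
  moreover have "i \<in> sym_mod_ideal sc br UNIV"
    using il(1) by (rule ue_ideal_subset_sym_mod_ideal[OF fsubspace_UNIV])
  moreover have "symz y \<in> sym_mod_ideal sc br UNIV"
    by (rule sym_sub_subset_sym_mod_ideal[OF fsubspace_UNIV symz_in_sym_sub]) simp_all
  moreover have "wd y = fadd (symz y) (fadd i l)"
    using il(3) by (intro ext) (auto simp: fops_apply fun_eq_iff algebra_simps)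
  ultimately show ?case
    by (simp add: fsubspace_add sym_mod_ideal_subspace[OF fsubspace_UNIV])
qed

lemma fin_supp_sym_mod_ideal:
  fixes v :: "'g::ab_group_add list \<Rightarrow> 'k::field_char_0"
  assumes "v \<in> fin_supp"
  shows "v \<in> sym_mod_ideal sc br UNIV"
  by (rule fin_supp_in_subspace[OF sym_mod_ideal_subspace[OF fsubspace_UNIV] wd_in_sym_mod_ideal assms])

section \<open>Commutators are congruent to symmetric elements of the trace kernel\<close>

lemma permute_list_update:
  assumes \<sigma>: "\<sigma> permutes {..<length zs}" and j: "j < length zs"
  shows "(map (\<lambda>i. zs ! \<sigma> i) [0..<length zs])[j := v]
    = map (\<lambda>i. (zs[\<sigma> j := v]) ! \<sigma> i) [0..<length zs]"
proof (rule nth_equalityI)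
  fix i assume "i < length ((map (\<lambda>i. zs ! \<sigma> i) [0..<length zs])[j := v])"
  then have i: "i < length zs" by simp
  have "\<sigma> i < length zs" using permutes_in_image[OF \<sigma>] i by simp
  moreover have "\<sigma> i = \<sigma> j \<longleftrightarrow> i = j" using permutes_inj[OF \<sigma>] by (auto dest: injD)
  ultimately show "(map (\<lambda>i. zs ! \<sigma> i) [0..<length zs])[j := v] ! i
      = map (\<lambda>i. (zs[\<sigma> j := v]) ! \<sigma> i) [0..<length zs] ! i"
    using i j by (auto simp: nth_list_update)
qed simp

lemma sum_update_permuted:
  assumes \<sigma>: "\<sigma> permutes {..<length zs}"
  shows "(\<Sum>j<length zs. F ((map (\<lambda>i. zs ! \<sigma> i) [0..<length zs])[j := g (zs ! \<sigma> j)]))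
    = (\<Sum>l<length zs. F (map (\<lambda>i. (zs[l := g (zs ! l)]) ! \<sigma> i) [0..<length zs]))"
proof -
  have "(\<Sum>j<length zs. F ((map (\<lambda>i. zs ! \<sigma> i) [0..<length zs])[j := g (zs ! \<sigma> j)]))
      = (\<Sum>j<length zs. F (map (\<lambda>i. (zs[\<sigma> j := g (zs ! \<sigma> j)]) ! \<sigma> i) [0..<length zs]))"
    by (rule sum.cong) (simp_all add: permute_list_update[OF \<sigma>])
  also have "\<dots> = (\<Sum>l<length zs. F (map (\<lambda>i. (zs[l := g (zs ! l)]) ! \<sigma> i) [0..<length zs]))"
    using sum.permute[OF \<sigma>, of "\<lambda>l. F (map (\<lambda>i. (zs[l := g (zs ! l)]) ! \<sigma> i) [0..<length zs])"]
    by (simp add: comp_def)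
  finally show ?thesis .
qed

definition ad :: "'g \<Rightarrow> ('g list \<Rightarrow> 'k::field) \<Rightarrow> 'g list \<Rightarrow> 'k" where
  "ad x f = fsub (sandwich [x] [] f) (sandwich [] [x] f)"

lemma ad_wd: "ad x (wd w) = fsub (wd (x # w)) (wd (w @ [x]))"
  by (simp add: ad_def sandwich_wd)

lemma ad_linear:
  "ad x (fadd f g) = fadd (ad x f) (ad x g)"
  "ad x (fscale c f) = fscale c (ad x f)"
  "ad x (fsub f g) = fsub (ad x f) (ad x g)"
  "ad x (fsum F A) = fsum (\<lambda>i. ad x (F i)) A"
  "ad x (\<lambda>_. 0) = (\<lambda>_. 0)"
  by (simp_all add: fun_eq_iff ad_def sandwich_linear fops_apply sum_subtractf algebra_simps)

lemma fsubspace_ad_preimage: "fsubspace W \<Longrightarrow> fsubspace {f. ad x f \<in> W}"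
  unfolding fsubspace_def by (simp add: ad_linear)

lemma ad_in_comm_span: "f \<in> fin_supp \<Longrightarrow> ad x f \<in> comm_span"
  unfolding comm_span_def
  by (intro fspan_superset CollectI exI[of _ "wd [x]"] exI[of _ f])
     (simp add: ad_def wmult_wd_left wmult_wd_right)

lemma ad_ue_ideal: "f \<in> ue_ideal sc br \<Longrightarrow> ad x f \<in> ue_ideal sc br"
  unfolding ad_def by (intro fsubspace_diff[OF ue_ideal_subspace] ue_ideal_sandwich)

context
  fixes sc :: "'k::field_char_0 \<Rightarrow> 'g::ab_group_add \<Rightarrow> 'g" and br :: "'g \<Rightarrow> 'g \<Rightarrow> 'g"
begin

text \<open>Modulo the ideal, \<open>ad x\<close> acts on a word as the derivation extending \<open>[x, -]\<close>.\<close>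

lemma ad_word:
  "fsub (fsub (wd (p @ x # w)) (wd (p @ w @ [x])))
     (fsum (\<lambda>j. wd (p @ w[j := br x (w ! j)])) {..<length w})
   \<in> (ue_ideal sc br :: ('g list \<Rightarrow> 'k) set)"
proof (induction w arbitrary: p)
  case Nil
  have "fsub (fsub (wd (p @ [x])) (wd (p @ [] @ [x])))
      (fsum (\<lambda>j. wd (p @ [][j := br x ([] ! j)])) {..<length []}) = (\<lambda>_. 0 :: 'k)"
    by (rule ext) (simp add: fops_apply)
  then show ?case using fsubspace_zero[OF ue_ideal_subspace] by simp
next
  case (Cons a w)
  have "fsub (fsub (wd (p @ x # a # w)) (wd (p @ (a # w) @ [x])))
      (fsum (\<lambda>j. wd (p @ (a # w)[j := br x ((a # w) ! j)])) {..<length (a # w)})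
    = fadd (fsub (fsub (wd (p @ [x, a] @ w)) (wd (p @ [a, x] @ w)))
          (wd (p @ [br x a] @ w)) :: 'g list \<Rightarrow> 'k)
        (fsub (fsub (wd ((p @ [a]) @ x # w)) (wd ((p @ [a]) @ w @ [x])))
          (fsum (\<lambda>j. wd ((p @ [a]) @ w[j := br x (w ! j)])) {..<length w}))"
    by (rule ext) (simp add: fops_apply sum.lessThan_Suc_shift del: sum.lessThan_Suc)
  moreover have "fsub (fsub (wd (p @ [x, a] @ w)) (wd (p @ [a, x] @ w))) (wd (p @ [br x a] @ w))
      \<in> (ue_ideal sc br :: ('g list \<Rightarrow> 'k) set)"
    by (rule ue_ideal_commutator_letters)
  ultimately show ?case
    using fsubspace_add[OF ue_ideal_subspace _ Cons.IH[of "p @ [a]"]] by simp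
qed

lemma ad_symz:
  "fsub (ad x (symz zs)) (fsum (\<lambda>l. symz (zs[l := br x (zs ! l)])) {..<length zs})
     \<in> (ue_ideal sc br :: ('g list \<Rightarrow> 'k) set)"
proof -
  let ?k = "length zs"
  let ?P = "{\<sigma>. \<sigma> permutes {..<?k}}"
  define \<pi> where "\<pi> \<sigma> ys = map (\<lambda>i. ys ! \<sigma> i) [0..<?k]" for \<sigma> and ys :: "'g list"
  define T :: "_ \<Rightarrow> 'g list \<Rightarrow> 'k" where "T \<sigma> = fsub (fsub (wd (x # \<pi> \<sigma> zs)) (wd (\<pi> \<sigma> zs @ [x])))
      (fsum (\<lambda>j. wd ((\<pi> \<sigma> zs)[j := br x (\<pi> \<sigma> zs ! j)])) {..<?k})" for \<sigma>
  have T: "T \<sigma> \<in> ue_ideal sc br" for \<sigma>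
    using ad_word[of "[]" x "\<pi> \<sigma> zs"] by (simp add: T_def \<pi>_def)
  have symz_eq: "symz ys = fscale (1 / fact ?k) (fsum (\<lambda>\<sigma>. wd (\<pi> \<sigma> ys)) ?P)"
    if "length ys = ?k" for ys
    using that by (simp add: symz_def \<pi>_def)
  have "fsub (ad x (symz zs)) (fsum (\<lambda>l. symz (zs[l := br x (zs ! l)])) {..<?k})
      = fscale (1 / fact ?k) (fsum T ?P)"
  proof (rule ext)
    fix w
    have reindex: "(\<Sum>j<?k. wd ((\<pi> \<sigma> zs)[j := br x (\<pi> \<sigma> zs ! j)]) w)
        = (\<Sum>l<?k. wd (\<pi> \<sigma> (zs[l := br x (zs ! l)])) w)" if "\<sigma> \<in> ?P" for \<sigma>
      using sum_update_permuted[of \<sigma> zs "\<lambda>u. wd u w" "br x"] that by (simp add: \<pi>_def)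
    have A: "ad x (symz zs) w = 1 / fact ?k * (\<Sum>\<sigma>\<in>?P. wd (x # \<pi> \<sigma> zs) w - wd (\<pi> \<sigma> zs @ [x]) w)"
      unfolding symz_eq[OF refl] ad_def
      by (simp add: sandwich_linear sandwich_wd fops_apply sum_subtractf right_diff_distrib)
    have B: "fsum (\<lambda>l. symz (zs[l := br x (zs ! l)])) {..<?k} w
        = 1 / fact ?k * (\<Sum>\<sigma>\<in>?P. \<Sum>l<?k. wd (\<pi> \<sigma> (zs[l := br x (zs ! l)])) w)"
      by (simp add: symz_eq fops_apply sum_distrib_left sum.swap[of _ ?P])
    have C: "fscale (1 / fact ?k) (fsum T ?P) w
        = 1 / fact ?k * ((\<Sum>\<sigma>\<in>?P. wd (x # \<pi> \<sigma> zs) w - wd (\<pi> \<sigma> zs @ [x]) w)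
        - (\<Sum>\<sigma>\<in>?P. \<Sum>l<?k. wd (\<pi> \<sigma> (zs[l := br x (zs ! l)])) w))"
      by (simp add: T_def fops_apply reindex sum_subtractf)
    show "fsub (ad x (symz zs)) (fsum (\<lambda>l. symz (zs[l := br x (zs ! l)])) {..<?k}) w
        = fscale (1 / fact ?k) (fsum T ?P) w"
      by (simp only: fsub_apply A B C right_diff_distrib)
  qed
  then show ?thesis
    by (simp add: T fsubspace_scale fsubspace_fsum ue_ideal_subspace)
qed

end

lemma ad_sym_sub:
  fixes g :: "'g::ab_group_add list \<Rightarrow> 'k::field_char_0"
  assumes "g \<in> sym_sub k"
  shows "ad x g \<in> set_plus_f (ue_ideal sc br) (sym_sub k)"
proof -
  let ?W = "set_plus_f (ue_ideal sc br) (sym_sub k :: ('g list \<Rightarrow> 'k) set)"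
  have W: "fsubspace ?W" by (rule set_plus_f_subspace[OF ue_ideal_subspace sym_sub_subspace])
  have "symz zs \<in> {f. ad x f \<in> ?W}" if "length zs = k" for zs
  proof -
    have "fsum (\<lambda>l. symz (zs[l := br x (zs ! l)])) {..<k} \<in> sym_sub k"
      using that by (intro fsubspace_fsum[OF sym_sub_subspace] symz_in_sym_sub) simp
    moreover have "ad x (symz zs)
        = fadd (fsub (ad x (symz zs)) (fsum (\<lambda>l. symz (zs[l := br x (zs ! l)])) {..<k}))
          (fsum (\<lambda>l. symz (zs[l := br x (zs ! l)])) {..<k})"
      by (rule ext) (simp add: fops_apply)
    ultimately show ?thesis
      using ad_symz[where sc = sc and br = br and x = x and zs = zs] that
      unfolding set_plus_f_def by force
  qed
  then have "fspan {symz xs |xs. length xs = k} \<subseteq> {f. ad x f \<in> ?W}"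
    by (intro fspan_minimal[OF fsubspace_ad_preimage[OF W]]) blast
  then show ?thesis using assms unfolding sym_sub_def by blast
qed

lemma ad_sym_sub_mod_ideal:
  fixes g :: "'g::ab_group_add list \<Rightarrow> 'k::field_char_0"
  assumes g: "g \<in> sym_sub k"
  shows "ad x g \<in> sym_mod_ideal sc br (trace_kernel sc br)"
proof -
  obtain i s where dec: "i \<in> ue_ideal sc br" "s \<in> sym_sub k" "ad x g = fadd i s"
    using ad_sym_sub[OF g] by (blast elim: set_plus_fE)
  text \<open>The symmetric part lies in the trace kernel because \<open>ad x g\<close> is a commutator.\<close>
  have "s = fsub (ad x g) i" by (rule ext) (simp add: dec(3) fops_apply)
  then have "s \<in> trace_kernel sc br"
    using fsubspace_diff[OF trace_kernel_subspace comm_span_subset_trace_kernel[OF ad_in_comm_span]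
        ue_ideal_subset_trace_kernel[OF dec(1)]] g sym_sub_fin_supp by auto
  then show ?thesis
    using dec fsubspace_add[OF sym_mod_ideal_subspace[OF trace_kernel_subspace]]
      ue_ideal_subset_sym_mod_ideal[OF trace_kernel_subspace]
      sym_sub_subset_sym_mod_ideal[OF trace_kernel_subspace]
    by metis
qed

lemma ad_sym_mod_ideal:
  fixes f :: "'g::ab_group_add list \<Rightarrow> 'k::field_char_0"
  assumes "f \<in> sym_mod_ideal sc br UNIV"
  shows "ad x f \<in> sym_mod_ideal sc br (trace_kernel sc br)"
proof -
  let ?U = "{f :: 'g list \<Rightarrow> 'k. ad x f \<in> sym_mod_ideal sc br (trace_kernel sc br)}"
  have U: "fsubspace ?U"
    by (rule fsubspace_ad_preimage[OF sym_mod_ideal_subspace[OF trace_kernel_subspace]])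
  have "ue_ideal sc br \<subseteq> ?U"
    using ue_ideal_subset_sym_mod_ideal[OF trace_kernel_subspace] ad_ue_ideal by blast
  moreover have "fsum h {..n} \<in> ?U" if "\<forall>k\<le>n. h k \<in> sym_sub k" for h n
    by (rule fsubspace_fsum[OF U]) (use that in \<open>auto intro!: ad_sym_sub_mod_ideal\<close>)
  then have "(\<Union>n. sym_sums UNIV n) \<subseteq> ?U"
    unfolding sym_sums_def by blast
  ultimately show ?thesis
    using set_plus_f_minimal[OF U] assms unfolding sym_mod_ideal_def by blast
qed

lemma commutator_words_sym_mod_ideal:
  "fsub (wd (u @ v)) (wd (v @ u))
     \<in> (sym_mod_ideal sc br (trace_kernel sc br) :: ('g::ab_group_add list \<Rightarrow> 'k::field_char_0) set)"
proof (induction u arbitrary: v)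
  case Nil
  have "fsub (wd ([] @ v)) (wd (v @ [])) = (\<lambda>_. 0 :: 'k)" by (rule ext) (simp add: fops_apply)
  then show ?case using fsubspace_zero[OF sym_mod_ideal_subspace[OF trace_kernel_subspace]] by simp
next
  case (Cons x u)
  have "fsub (wd ((x # u) @ v)) (wd (v @ x # u))
      = fadd (ad x (wd (u @ v))) (fsub (wd (u @ (v @ [x]))) (wd ((v @ [x]) @ u)) :: 'g list \<Rightarrow> 'k)"
    by (rule ext) (simp add: ad_wd fops_apply)
  moreover have "ad x (wd (u @ v)) \<in> sym_mod_ideal sc br (trace_kernel sc br)"
    by (rule ad_sym_mod_ideal[OF wd_in_sym_mod_ideal])
  ultimately show ?case
    using fsubspace_add[OF sym_mod_ideal_subspace[OF trace_kernel_subspace] _ Cons.IH[of "v @ [x]"]]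
    by simp
qed

lemma comm_span_subset_sym_mod_ideal:
  "(comm_span :: ('g::ab_group_add list \<Rightarrow> 'k::field_char_0) set)
     \<subseteq> sym_mod_ideal sc br (trace_kernel sc br)"
  unfolding comm_span_def
proof (rule fspan_minimal[OF sym_mod_ideal_subspace[OF trace_kernel_subspace]], rule subsetI)
  fix c :: "'g list \<Rightarrow> 'k"
  assume "c \<in> {fsub (wmult a b) (wmult b a) |a b. a \<in> fin_supp \<and> b \<in> fin_supp}"
  then obtain a b where c: "c = fsub (wmult a b) (wmult b a)"
    and a: "a \<in> fin_supp" and b: "b \<in> fin_supp"
    by blast
  let ?A = "{u. a u \<noteq> 0}" and ?B = "{v. b v \<noteq> 0}"
  have "c = fsum (\<lambda>u. fscale (a u) (fsum (\<lambda>v. fscale (b v) (fsub (wd (u @ v)) (wd (v @ u)))) ?B)) ?A"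
    unfolding c wmult_expand[OF a b] wmult_expand[OF b a]
    by (rule ext) (simp add: fops_apply sum_subtractf right_diff_distrib sum_distrib_left
        sum.swap[of _ ?A] mult.left_commute)
  then show "c \<in> sym_mod_ideal sc br (trace_kernel sc br)"
    by (simp add: fsubspace_fsum fsubspace_scale sym_mod_ideal_subspace trace_kernel_subspace
        commutator_words_sym_mod_ideal)
qed

lemma fin_supp_sym_mod_trace_kernel:
  fixes v :: "'g::ab_group_add list \<Rightarrow> 'k::field_char_0"
  assumes "v \<in> fin_supp"
  shows "\<exists>N f. (\<forall>m\<le>N. f m \<in> sym_sub m) \<and> fsub v (fsum f {..N}) \<in> trace_kernel sc br"
proof -
  obtain N f where "\<forall>m\<le>N. f m \<in> sym_sub m \<inter> UNIV" "fsub v (fsum f {..N}) \<in> ue_ideal sc br"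
    using fin_supp_sym_mod_ideal[OF assms] by (rule sym_mod_idealE)
  then show ?thesis using ue_ideal_subset_trace_kernel by blast
qed

lemma fsum_atMost_extend:
  fixes m n :: nat
  assumes "m \<le> n"
  shows "fsum (\<lambda>k. if k \<le> m then f k else (\<lambda>_. 0)) {..n} = fsum f {..m}"
proof (rule ext)
  fix w
  have "(\<Sum>k\<le>n. (if k \<le> m then f k else (\<lambda>_. 0)) w) = (\<Sum>k\<le>m. (if k \<le> m then f k else (\<lambda>_. 0)) w)"
    using assms by (intro sum.mono_neutral_right) auto
  then show "fsum (\<lambda>k. if k \<le> m then f k else (\<lambda>_. 0)) {..n} w = fsum f {..m} w"
    by (simp add: fops_apply)
qed

context pbw_basis
begin

lemma sym_components_in_trace_kernel:
  assumes f: "\<forall>m\<le>N. f m \<in> sym_sub m" and TK: "fsum f {..N} \<in> trace_kernel sc br"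
  shows "\<forall>m\<le>N. f m \<in> trace_kernel sc br"
proof -
  obtain i c where ic: "i \<in> ue_ideal sc br" "c \<in> comm_span" "fsum f {..N} = fadd i c"
    using TK unfolding trace_kernel_def by (blast elim: set_plus_fE)
  have "c \<in> sym_mod_ideal sc br (trace_kernel sc br)"
    using comm_span_subset_sym_mod_ideal ic(2) by blast
  then obtain K h where h: "\<forall>k\<le>K. h k \<in> sym_sub k \<inter> trace_kernel sc br"
    and ch: "fsub c (fsum h {..K}) \<in> ue_ideal sc br"
    by (rule sym_mod_idealE)
  define L where "L = max N K"
  define f' where "f' m = (if m \<le> N then f m else (\<lambda>_. 0))" for m
  define h' where "h' m = (if m \<le> K then h m else (\<lambda>_. 0))" for m
  text \<open>The differences \<open>f m - h m\<close> are symmetric and their sum lies in the ideal, so by PBW each of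
    them does; and \<open>h m\<close> lies in the trace kernel.\<close>
  define d where "d m = fsub (f' m) (h' m)" for m
  have "\<forall>m\<le>L. d m \<in> sym_sub m"
    using f h fsubspace_zero[OF sym_sub_subspace]
    by (auto simp: d_def f'_def h'_def intro!: fsubspace_diff[OF sym_sub_subspace])
  moreover have "fsum d {..L} = fadd i (fsub c (fsum h {..K}))"
    using fsum_atMost_extend[of N L f] fsum_atMost_extend[of K L h] ic(3)
    by (auto simp: L_def d_def f'_def h'_def fun_eq_iff fops_apply sum_subtractf)
  then have "fsum d {..L} \<in> ue_ideal sc br"
    using fsubspace_add[OF ue_ideal_subspace ic(1) ch] by simp
  ultimately have dI: "\<forall>m\<le>L. d m \<in> ue_ideal sc br"
    by (rule sym_components_in_ue_ideal)
  show ?thesis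
  proof (intro allI impI)
    fix m assume m: "m \<le> N"
    have "f m = fadd (d m) (h' m)" by (rule ext) (simp add: d_def f'_def m fops_apply)
    moreover have "h' m \<in> trace_kernel sc br"
      using h fsubspace_zero[OF trace_kernel_subspace] by (auto simp: h'_def)
    moreover have "d m \<in> trace_kernel sc br"
      using dI m by (auto simp: L_def intro: ue_ideal_subset_trace_kernel)
    ultimately show "f m \<in> trace_kernel sc br" using fsubspace_add[OF trace_kernel_subspace] by simp
  qed
qed

end

lemma exists_strict_total_order:
  "\<exists>lt :: 'a \<Rightarrow> 'a \<Rightarrow> bool. (\<forall>a. \<not> lt a a) \<and> (\<forall>a b c. lt a b \<longrightarrow> lt b c \<longrightarrow> lt a c)
     \<and> (\<forall>a b. a \<noteq> b \<longrightarrow> lt a b \<or> lt b a)"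
proof -
  obtain r :: "'a rel" where r: "Well_order r" "Field r = UNIV"
    using well_ordering by (elim exE conjE)
  have lin: "linear_order r" using r by (simp add: well_order_on_def)
  have tr: "trans r"
    using lin by (simp add: linear_order_on_def partial_order_on_def preorder_on_def)
  have an: "antisym r" using lin by (simp add: linear_order_on_def partial_order_on_def)
  have tot: "total_on UNIV r" using lin by (simp add: linear_order_on_def)
  define lt where "lt a b \<longleftrightarrow> (a, b) \<in> r \<and> a \<noteq> b" for a b
  have "lt a c" if "lt a b" "lt b c" for a b c
  proof -
    have ab: "(a, b) \<in> r" "a \<noteq> b" and bc: "(b, c) \<in> r" using that by (simp_all add: lt_def)
    have "(a, c) \<in> r" using tr ab bc by (meson transD)
    moreover have "a \<noteq> c"
    proof
      assume "a = c"
      then show False using an ab bc by (meson antisymD)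
    qed
    ultimately show ?thesis by (simp add: lt_def)
  qed
  moreover have "lt a b \<or> lt b a" if "a \<noteq> b" for a b
    using tot that by (auto simp: lt_def total_on_def)
  moreover have "\<not> lt a a" for a by (simp add: lt_def)
  ultimately show ?thesis by (intro exI[of _ lt] conjI allI impI) blast+
qed

lemma pbw_basis_exists:
  fixes sc :: "'k::field_char_0 \<Rightarrow> 'g::ab_group_add \<Rightarrow> 'g"
  assumes lie: "lie_algebra sc br"
  obtains B lt where "pbw_basis sc br B lt"
proof -
  have "vector_space sc" using lie by (simp add: lie_algebra_def module_iff_vector_space)
  then obtain B where B: "\<not> module.dependent sc B" "UNIV \<subseteq> module.span sc B"
    by (rule vector_space.basis_exists[of sc UNIV]) blast
  obtain lt :: "'g \<Rightarrow> 'g \<Rightarrow> bool" where lt: "\<forall>a. \<not> lt a a" "\<forall>a b c. lt a b \<longrightarrow> lt b c \<longrightarrow> lt a c"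
    "\<forall>a b. a \<noteq> b \<longrightarrow> lt a b \<or> lt b a"
    using exists_strict_total_order by (elim exE conjE)
  have "pbw_basis sc br B lt"
  proof
    show "lie_algebra sc br" by (rule lie)
    show "\<not> module.dependent sc B" by (rule B(1))
    show "module.span sc B = UNIV" using B(2) by blast
  qed (use lt in blast)+
  then show ?thesis by (rule that)
qed

theorem theorem3p1:
  fixes sc :: "'k::field_char_0 \<Rightarrow> 'g::ab_group_add \<Rightarrow> 'g"
    and br :: "'g \<Rightarrow> 'g \<Rightarrow> 'g"
  assumes "lie_algebra sc br"
  shows "(\<forall>v \<in> (fin_supp :: ('g list \<Rightarrow> 'k) set). \<exists>N f.
            (\<forall>m\<le>N. f m \<in> sym_sub m) \<and> fsub v (fsum f {..N}) \<in> trace_kernel sc br)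
       \<and> (\<forall>N (f :: nat \<Rightarrow> 'g list \<Rightarrow> 'k).
            (\<forall>m\<le>N. f m \<in> sym_sub m) \<and> fsum f {..N} \<in> trace_kernel sc br
              \<longrightarrow> (\<forall>m\<le>N. f m \<in> trace_kernel sc br))"
proof -
  obtain B lt where "pbw_basis sc br B lt"
    using pbw_basis_exists[OF assms] .
  then interpret pbw_basis sc br B lt .
  show ?thesis
    using fin_supp_sym_mod_trace_kernel sym_components_in_trace_kernel by auto
qed

end
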